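(* Let $G$ be a finite simple graph on vertex set $\{1,\dots,n\}$ and let $\mathcal{S}=(S_1,\dots,S_n)$ and $\mathcal{S}'=(S'_1,\dots,S'_n)$ be any two realizations of $G$ by Pauli strings (possibly of different lengths). Then $$\mathrm{Conv}\big(\downarrow \mathcal{Q}(\mathcal{S})\big)\cap\mathbb{R}^n_{\ge0}=\mathrm{Conv}\big(\downarrow \mathcal{Q}(\mathcal{S}')\big)\cap\mathbb{R}^n_{\ge0}.$$ Denoting this common set by $\operatorname{BETA}(G)$, one has, for every $w\in\mathbb{R}^n_{\ge0}$, $$\beta(G,w)=\max_{v\in\operatorname{BETA}(G)}\sum_{i=1}^n w_iv_i .$$
   Context: A Pauli string of length $\ell$ is a tensor product $P_1\otimes\cdots\otimes P_\ell$ with each $P_k\in\{I,X,Y,Z\}$ (the $2\times 2$ identity and Pauli matrices); any two Pauli strings either commute or anticommute. A realization of a graph $G$ on vertex set $\{1,\dots,n\}$ is a tuple $(S_1,\dots,S_n)$ of Pauli strings of a common length with $S_iS_j=-S_jS_i$ if $i,j$ are adjacent in $G$ and $S_iS_j=S_jS_i$ otherwise ($G$ is then called the frustration graph of the tuple). For a density matrix $\rho$ write $\langle A\rangle_\rho=\operatorname{tr}(\rho A)$. For a realization $\mathcal{S}$, $\mathcal{Q}(\mathcal{S})=\{(\langle S_1\rangle_\rho^2,\dots,\langle S_n\rangle_\rho^2):\rho \text{ a density matrix}\}\subseteq\mathbb{R}^n$. For $T\subseteq\mathbb{R}^n$, $\downarrow T=\{x\in\mathbb{R}^n:\exists y\in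 T,\ x_i\le y_i\ \forall i\}$, and $\mathrm{Conv}$ denotes convex hull. The weighted beta number is $\beta(G,w)=\sup_\rho\sum_i w_i\langle S_i\rangle_\rho^2$ (supremum over density matrices) for a realization $(S_i)$ of $G$; it is known that this value does not depend on the choice of realization, and every finite simple graph has a realization. *)

theory Defs
  imports "HOL-Analysis.Analysis" "Jordan_Normal_Form.Matrix"
begin

datatype pauli = PI | PX | PY | PZ

fun pauli_entry :: "pauli \<Rightarrow> nat \<Rightarrow> nat \<Rightarrow> complex" where
  "pauli_entry PI r c = (if r = c then 1 else 0)"
| "pauli_entry PX r c = (if r \<noteq> c then 1 else 0)"
| "pauli_entry PY r c = (if r = 0 \<and> c = 1 then - \<i> else if r = 1 \<and> c = 0 then \<i> else 0)"
| "pauli_entry PZ r c = (if r = c then (if r = 0 then 1 else -1) else 0)"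

text \<open>The Kronecker product is written out entrywise:
  factor k (0-based) acts on bit (l-1-k) of the row/column index (so P_1 is the
  most significant tensor factor).\<close>
definition bitk :: "nat \<Rightarrow> nat \<Rightarrow> nat \<Rightarrow> nat" where
  "bitk l k r = (r div 2 ^ (l - 1 - k)) mod 2"

definition pauli_string_mat :: "pauli list \<Rightarrow> complex mat" where
  "pauli_string_mat ps =
     (let l = length ps in
      mat (2 ^ l) (2 ^ l)
        (\<lambda>(r, c). \<Prod>k<l. pauli_entry (ps ! k) (bitk l k r) (bitk l k c)))"

definition mat_trace :: "complex mat \<Rightarrow> complex" where
  "mat_trace A = (\<Sum>i<dim_row A. A $$ (i, i))"

definition density_matrix :: "nat \<Rightarrow> complex mat \<Rightarrow> bool" where
  "density_matrix d \<rho> \<longleftrightarrow>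
     \<rho> \<in> carrier_mat d d \<and>
     (\<forall>i<d. \<forall>j<d. \<rho> $$ (i, j) = cnj (\<rho> $$ (j, i))) \<and>
     (\<forall>v :: nat \<Rightarrow> complex.
        let q = (\<Sum>i<d. \<Sum>j<d. cnj (v i) * \<rho> $$ (i, j) * v j)
        in Im q = 0 \<and> Re q \<ge> 0) \<and>
     mat_trace \<rho> = 1"

text \<open>Expectation value tr(rho A); for Hermitian A (e.g. a Pauli string) and a
  density matrix rho this is a real number, and we take its real part.\<close>
definition expect :: "complex mat \<Rightarrow> complex mat \<Rightarrow> real" where
  "expect \<rho> A = Re (mat_trace (\<rho> * A))"

definition simple_graph :: "('n \<Rightarrow> 'n \<Rightarrow> bool) \<Rightarrow> bool" where
  "simple_graph G \<longleftrightarrow> (\<forall>i j. G i j \<longrightarrow> G j i) \<and> (\<forall>i. \<not> G i i)"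

definition realization :: "('n \<Rightarrow> 'n \<Rightarrow> bool) \<Rightarrow> ('n \<Rightarrow> pauli list) \<Rightarrow> bool" where
  "realization G S \<longleftrightarrow>
     (\<exists>l. \<forall>i. length (S i) = l) \<and>
     (\<forall>i j. (G i j \<longrightarrow>
               pauli_string_mat (S i) * pauli_string_mat (S j)
                 = - (pauli_string_mat (S j) * pauli_string_mat (S i))) \<and>
            (\<not> G i j \<longrightarrow>
               pauli_string_mat (S i) * pauli_string_mat (S j)
                 = pauli_string_mat (S j) * pauli_string_mat (S i)))"

definition Qset :: "('n::finite \<Rightarrow> pauli list) \<Rightarrow> (real ^ 'n) set" where
  "Qset S = {x. \<exists>\<rho>. (\<forall>i. density_matrix (2 ^ length (S i)) \<rho>) \<and>
                    (\<forall>i. x $ i = (expect \<rho> (pauli_string_mat (S i)))\<^sup>2)}"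

definition down_closure :: "(real ^ 'n) set \<Rightarrow> (real ^ 'n) set" where
  "down_closure T = {x. \<exists>y\<in>T. \<forall>i. x $ i \<le> y $ i}"

definition nonneg_orthant :: "(real ^ 'n) set" where
  "nonneg_orthant = {x. \<forall>i. 0 \<le> x $ i}"

definition BETA_of :: "('n::finite \<Rightarrow> pauli list) \<Rightarrow> (real ^ 'n) set" where
  "BETA_of S = convex hull (down_closure (Qset S)) \<inter> nonneg_orthant"

definition beta_num :: "('n::finite \<Rightarrow> 'n \<Rightarrow> bool) \<Rightarrow> (real ^ 'n) \<Rightarrow> real" where
  "beta_num G w =
     (let S = (SOME S. realization G S) in
      Sup {\<Sum>i\<in>UNIV. w $ i * (expect \<rho> (pauli_string_mat (S i)))\<^sup>2 | \<rho>.
             \<forall>i. density_matrix (2 ^ length (S i)) \<rho>})"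

end

theory Submission
  imports Defs
begin

(* Let S and S' realize the same graph, with matrices P_i and P'_i acting on C^d and C^d'.
   Since P_i, P_j and P'_i, P'_j commute or anticommute together, the operators
   U_i = conj(P_i) (x) P'_i on C^d (x) C^d' pairwise commute.  For a state rho on C^d, the partial
   traces tr_1((rho^T (x) 1) Pi_b) of the joint eigenprojections Pi_b of the U_i are positive and
   sum to the identity; normalized, they are states sigma_b with weights c_b such that
   <P_i>_rho = sum_b c_b e_bi <P'_i>_sigma_b for signs e_bi = +-1.  Jensen's inequality gives
   <P_i>_rho^2 <= sum_b c_b <P'_i>_sigma_b^2, so Q(S) lies below the convex hull of Q(S'), and by
   symmetry the convex hulls of the down-closures coincide.  For w >= 0 the weighted sum of squared
   expectations attains its supremum on the compact set of states, at a point of Q(S), and a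
   linear functional with nonnegative weights is maximized over the down-closed convex hull
   at the same point. *)

lemma mult_add_less_mult:
  fixes x a d d' :: nat
  assumes "x < d" "a < d'"
  shows "x * d' + a < d * d'"
proof -
  have "x * d' + a < Suc x * d'" using assms(2) by simp
  also have "\<dots> \<le> d * d'" using assms(1) by (intro mult_right_mono) simp_all
  finally show ?thesis .
qed

lemma mult_add_eq_mult_add_iff:
  fixes x y a b d' :: nat
  assumes "a < d'" "b < d'"
  shows "x * d' + a = y * d' + b \<longleftrightarrow> x = y \<and> a = b"
proof
  assume "x * d' + a = y * d' + b"
  then have "(x * d' + a) div d' = (y * d' + b) div d'" "(x * d' + a) mod d' = (y * d' + b) mod d'"
    by auto
  then show "x = y \<and> a = b" using assms by simp
qed auto

lemma sum_lessThan_mult: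
  fixes f :: "nat \<Rightarrow> 'a::comm_monoid_add"
  shows "(\<Sum>k<m * n. f k) = (\<Sum>s<m. \<Sum>t<n. f (s * n + t))"
proof -
  have "(\<Sum>k\<in>{s * n..<s * n + n}. f k) = (\<Sum>t<n. f (s * n + t))" for s
    using sum.shift_bounds_nat_ivl[of f 0 "s * n" n]
    by (simp add: atLeast0LessThan add.commute)
  then show ?thesis using sum.nat_group[of "\<lambda>k. f k" n m] by simp
qed

lemma mat_mult_entry:
  "A \<in> carrier_mat N N \<Longrightarrow> B \<in> carrier_mat N N \<Longrightarrow> i < N \<Longrightarrow> j < N \<Longrightarrow>
   (A * B) $$ (i, j) = (\<Sum>k<N. A $$ (i, k) * B $$ (k, j))"
  by (simp add: scalar_prod_def atLeast0LessThan)

lemma mat_trace_mult: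
  assumes "A \<in> carrier_mat d d" "B \<in> carrier_mat d d"
  shows "mat_trace (A * B) = (\<Sum>a<d. \<Sum>c<d. A $$ (a, c) * B $$ (c, a))"
proof -
  have "mat_trace (A * B) = (\<Sum>a<d. (A * B) $$ (a, a))" using assms by (simp add: mat_trace_def)
  also have "\<dots> = (\<Sum>a<d. \<Sum>c<d. A $$ (a, c) * B $$ (c, a))"
    using assms by (intro sum.cong refl mat_mult_entry) auto
  finally show ?thesis .
qed

section \<open>Kronecker products and Pauli strings\<close>

definition kron :: "complex mat \<Rightarrow> complex mat \<Rightarrow> complex mat" where
  "kron A B = mat (dim_row A * dim_row B) (dim_col A * dim_col B)
     (\<lambda>(i, j). A $$ (i div dim_row B, j div dim_col B) * B $$ (i mod dim_row B, j mod dim_col B))"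

lemma dim_kron [simp]:
  "dim_row (kron A B) = dim_row A * dim_row B"
  "dim_col (kron A B) = dim_col A * dim_col B"
  by (auto simp: kron_def)

lemma kron_index [simp]:
  "i < dim_row A * dim_row B \<Longrightarrow> j < dim_col A * dim_col B \<Longrightarrow>
   kron A B $$ (i, j) = A $$ (i div dim_row B, j div dim_col B) * B $$ (i mod dim_row B, j mod dim_col B)"
  by (auto simp: kron_def)

lemma kron_index_mult_add:
  assumes "A \<in> carrier_mat d d" "B \<in> carrier_mat d' d'" "x < d" "y < d" "a < d'" "c < d'"
  shows "kron A B $$ (x * d' + a, y * d' + c) = A $$ (x, y) * B $$ (a, c)"
  using assms mult_add_less_mult[of x d a d'] mult_add_less_mult[of y d c d'] by simp

lemma kron_mult:
  assumes "A \<in> carrier_mat m n" "C \<in> carrier_mat n p" "B \<in> carrier_mat m' n'" "D \<in> carrier_mat n' p'"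
  shows "kron A B * kron C D = kron (A * C) (B * D)"
proof (rule eq_matI)
  fix i j assume "i < dim_row (kron (A * C) (B * D))" "j < dim_col (kron (A * C) (B * D))"
  then have i: "i < m * m'" and j: "j < p * p'" using assms by auto
  then have "m' > 0" "p' > 0" by (auto intro!: Nat.gr0I)
  then have ij: "i div m' < m" "i mod m' < m'" "j div p' < p" "j mod p' < p'"
    using i j by (auto simp: less_mult_imp_div_less)
  have "(kron A B * kron C D) $$ (i, j) = (\<Sum>k<n * n'. kron A B $$ (i, k) * kron C D $$ (k, j))"
    using assms i j by (simp add: scalar_prod_def atLeast0LessThan)
  also have "\<dots> = (\<Sum>s<n. \<Sum>t<n'. kron A B $$ (i, s * n' + t) * kron C D $$ (s * n' + t, j))"
    by (rule sum_lessThan_mult)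
  also have "\<dots> = (\<Sum>s<n. \<Sum>t<n'. (A $$ (i div m', s) * C $$ (s, j div p')) *
                                    (B $$ (i mod m', t) * D $$ (t, j mod p')))"
  proof (intro sum.cong refl)
    fix s t assume "s \<in> {..<n}" "t \<in> {..<n'}"
    then have "s * n' + t < n * n'" "(s * n' + t) div n' = s" "(s * n' + t) mod n' = t"
      by (auto intro: mult_add_less_mult)
    then show "kron A B $$ (i, s * n' + t) * kron C D $$ (s * n' + t, j) =
               (A $$ (i div m', s) * C $$ (s, j div p')) * (B $$ (i mod m', t) * D $$ (t, j mod p'))"
      using assms i j by (simp add: ac_simps)
  qed
  also have "\<dots> = (\<Sum>s<n. A $$ (i div m', s) * C $$ (s, j div p')) *
                  (\<Sum>t<n'. B $$ (i mod m', t) * D $$ (t, j mod p'))"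
    by (simp add: sum_product)
  also have "\<dots> = kron (A * C) (B * D) $$ (i, j)"
    using assms i j ij by (simp add: scalar_prod_def atLeast0LessThan)
  finally show "(kron A B * kron C D) $$ (i, j) = kron (A * C) (B * D) $$ (i, j)" .
qed (use assms in auto)

lemma kron_one: "kron (1\<^sub>m a) (1\<^sub>m b) = 1\<^sub>m (a * b)"
proof (rule eq_matI)
  fix i j assume "i < dim_row (1\<^sub>m (a * b))" "j < dim_col (1\<^sub>m (a * b))"
  then have ij: "i < a * b" "j < a * b" by auto
  then have "b > 0" by (auto intro!: Nat.gr0I)
  then have "(i div b = j div b \<and> i mod b = j mod b) = (i = j)"
    by (metis div_mult_mod_eq)
  then show "kron (1\<^sub>m a) (1\<^sub>m b) $$ (i, j) = 1\<^sub>m (a * b) $$ (i, j)"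
    using ij \<open>b > 0\<close> by (auto simp: less_mult_imp_div_less)
qed auto

lemma kron_uminus_uminus: "kron (- A) (- B) = kron A B"
proof (rule eq_matI)
  fix i j assume "i < dim_row (kron A B)" "j < dim_col (kron A B)"
  then have ij: "i < dim_row A * dim_row B" "j < dim_col A * dim_col B" by auto
  then have "dim_row B > 0" "dim_col B > 0" by (auto intro!: Nat.gr0I)
  then have "i div dim_row B < dim_row A" "j div dim_col B < dim_col A"
    "i mod dim_row B < dim_row B" "j mod dim_col B < dim_col B"
    using ij by (auto simp: less_mult_imp_div_less)
  then show "kron (- A) (- B) $$ (i, j) = kron A B $$ (i, j)" using ij by simp
qed auto

definition conj_mat :: "complex mat \<Rightarrow> complex mat" where
  "conj_mat A = map_mat cnj A"

lemma dim_conj_mat [simp]: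
  "dim_row (conj_mat A) = dim_row A" "dim_col (conj_mat A) = dim_col A"
  by (auto simp: conj_mat_def)

lemma conj_mat_mult:
  assumes "A \<in> carrier_mat m n" "B \<in> carrier_mat n p"
  shows "conj_mat (A * B) = conj_mat A * conj_mat B"
proof (rule eq_matI)
  fix i j assume "i < dim_row (conj_mat A * conj_mat B)" "j < dim_col (conj_mat A * conj_mat B)"
  then have "i < m" "j < p" using assms by auto
  then show "conj_mat (A * B) $$ (i, j) = (conj_mat A * conj_mat B) $$ (i, j)"
    using assms by (simp add: conj_mat_def scalar_prod_def cnj_sum)
qed (use assms in auto)

lemma conj_mat_uminus: "conj_mat (- A) = - conj_mat A"
  by (rule eq_matI) (auto simp: conj_mat_def)

lemma conj_mat_one: "conj_mat (1\<^sub>m n) = 1\<^sub>m n"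
  by (rule eq_matI) (auto simp: conj_mat_def)

definition pauli_mat :: "pauli \<Rightarrow> complex mat" where
  "pauli_mat p = mat 2 2 (\<lambda>(r, c). pauli_entry p r c)"

lemma pauli_string_mat_carrier:
  "pauli_string_mat ps \<in> carrier_mat (2 ^ length ps) (2 ^ length ps)"
  by (simp add: pauli_string_mat_def Let_def)

lemma bitk_Suc:
  assumes "k < l"
  shows "bitk (Suc l) (Suc k) r = bitk l k (r mod 2 ^ l)"
proof -
  define m where "m = l - 1 - k"
  have l: "l = m + Suc k" using assms m_def by simp
  have "(r mod 2 ^ l) div 2 ^ m = (r div 2 ^ m) mod 2 ^ Suc k"
    unfolding l power_add by (simp add: mod_mult2_eq)
  then show ?thesis unfolding bitk_def m_def[symmetric] using assms by (simp add: m_def mod_mod_cancel)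
qed

lemma pauli_string_mat_Cons: "pauli_string_mat (p # ps) = kron (pauli_mat p) (pauli_string_mat ps)"
proof (rule eq_matI)
  let ?l = "length ps"
  fix i j assume "i < dim_row (kron (pauli_mat p) (pauli_string_mat ps))"
    "j < dim_col (kron (pauli_mat p) (pauli_string_mat ps))"
  then have i: "i < 2 * 2 ^ ?l" and j: "j < 2 * 2 ^ ?l"
    by (auto simp: pauli_mat_def pauli_string_mat_def Let_def)
  have bit0: "bitk (Suc ?l) 0 x = x div 2 ^ ?l" if "x < 2 * 2 ^ ?l" for x
    using that by (simp add: bitk_def less_mult_imp_div_less)
  have "pauli_string_mat (p # ps) $$ (i, j) =
        (\<Prod>k<Suc ?l. pauli_entry ((p # ps) ! k) (bitk (Suc ?l) k i) (bitk (Suc ?l) k j))"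
    using i j by (simp add: pauli_string_mat_def Let_def)
  also have "\<dots> = pauli_entry p (bitk (Suc ?l) 0 i) (bitk (Suc ?l) 0 j) *
      (\<Prod>k<?l. pauli_entry (ps ! k) (bitk (Suc ?l) (Suc k) i) (bitk (Suc ?l) (Suc k) j))"
    by (simp add: prod.lessThan_Suc_shift del: prod.lessThan_Suc)
  also have "\<dots> = pauli_entry p (i div 2 ^ ?l) (j div 2 ^ ?l) *
      (\<Prod>k<?l. pauli_entry (ps ! k) (bitk ?l k (i mod 2 ^ ?l)) (bitk ?l k (j mod 2 ^ ?l)))"
    using bit0 i j bitk_Suc by simp
  also have "\<dots> = kron (pauli_mat p) (pauli_string_mat ps) $$ (i, j)"
    using i j by (simp add: pauli_mat_def pauli_string_mat_def Let_def less_mult_imp_div_less)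
  finally show "pauli_string_mat (p # ps) $$ (i, j) = kron (pauli_mat p) (pauli_string_mat ps) $$ (i, j)" .
qed (auto simp: pauli_mat_def pauli_string_mat_def Let_def)

lemma pauli_mat_square: "pauli_mat p * pauli_mat p = 1\<^sub>m 2"
proof (rule eq_matI)
  fix i j assume "i < dim_row (1\<^sub>m 2)" "j < dim_col (1\<^sub>m 2)"
  then show "(pauli_mat p * pauli_mat p) $$ (i, j) = 1\<^sub>m 2 $$ (i, j)"
    by (cases p) (auto simp: pauli_mat_def scalar_prod_def numeral_2_eq_2 less_Suc_eq)
qed (simp_all add: pauli_mat_def)

lemma pauli_string_mat_square: "pauli_string_mat ps * pauli_string_mat ps = 1\<^sub>m (2 ^ length ps)"
proof (induction ps)
  case Nil
  show ?case by (rule eq_matI) (auto simp: pauli_string_mat_def scalar_prod_def)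
next
  case (Cons p ps)
  have "pauli_mat p \<in> carrier_mat 2 2" by (simp add: pauli_mat_def)
  note kron_mult[OF this this pauli_string_mat_carrier pauli_string_mat_carrier]
  then show ?case by (simp add: pauli_string_mat_Cons Cons pauli_mat_square kron_one)
qed

definition hermitian_mat :: "nat \<Rightarrow> complex mat \<Rightarrow> bool" where
  "hermitian_mat N M \<longleftrightarrow> M \<in> carrier_mat N N \<and> (\<forall>i<N. \<forall>j<N. M $$ (i, j) = cnj (M $$ (j, i)))"

lemma hermitian_matD:
  "hermitian_mat N M \<Longrightarrow> M \<in> carrier_mat N N"
  "hermitian_mat N M \<Longrightarrow> i < N \<Longrightarrow> j < N \<Longrightarrow> M $$ (i, j) = cnj (M $$ (j, i))"
  unfolding hermitian_mat_def by blast+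

lemma pauli_string_mat_hermitian: "hermitian_mat (2 ^ length ps) (pauli_string_mat ps)"
proof -
  have "cnj (pauli_entry p a b) = pauli_entry p b a" for p a b by (cases p) auto
  then show ?thesis by (simp add: hermitian_mat_def pauli_string_mat_def Let_def)
qed

lemma conj_mat_carrier: "A \<in> carrier_mat m n \<Longrightarrow> conj_mat A \<in> carrier_mat m n"
  unfolding conj_mat_def by (rule map_carrier_mat[THEN iffD2])

lemma hermitian_mat_kron_conj:
  assumes "hermitian_mat d P" "hermitian_mat d' P'"
  shows "hermitian_mat (d * d') (kron (conj_mat P) P')"
  unfolding hermitian_mat_def
proof (intro conjI allI impI)
  have P: "P \<in> carrier_mat d d" and P': "P' \<in> carrier_mat d' d'" using assms hermitian_matD(1) by auto
  then show "kron (conj_mat P) P' \<in> carrier_mat (d * d') (d * d')" by (intro carrier_matI) simp_all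
  fix i j assume i: "i < d * d'" and j: "j < d * d'"
  then have "d' > 0" by (auto intro!: Nat.gr0I)
  then have idx: "i div d' < d" "j div d' < d" "i mod d' < d'" "j mod d' < d'"
    using i j by (auto simp: less_mult_imp_div_less)
  have "P $$ (i div d', j div d') = cnj (P $$ (j div d', i div d'))"
    "P' $$ (i mod d', j mod d') = cnj (P' $$ (j mod d', i mod d'))"
    using idx hermitian_matD(2)[OF assms(1)] hermitian_matD(2)[OF assms(2)] by blast+
  then show "kron (conj_mat P) P' $$ (i, j) = cnj (kron (conj_mat P) P' $$ (j, i))"
    using i j idx P P' by (simp add: conj_mat_def)
qed

lemma kron_conj_involution:
  assumes P: "P \<in> carrier_mat d d" and P': "P' \<in> carrier_mat d' d'"
    and "P * P = 1\<^sub>m d" "P' * P' = 1\<^sub>m d'"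
  shows "kron (conj_mat P) P' * kron (conj_mat P) P' = 1\<^sub>m (d * d')"
proof -
  have "kron (conj_mat P) P' * kron (conj_mat P) P' = kron (conj_mat (P * P)) (P' * P')"
    using kron_mult[OF conj_mat_carrier[OF P] conj_mat_carrier[OF P] P' P'] conj_mat_mult[OF P P]
    by simp
  then show ?thesis using assms(3,4) by (simp add: conj_mat_one kron_one)
qed

text \<open>The commutation signs of the two tensor factors cancel.\<close>
lemma kron_conj_commute:
  assumes P: "P \<in> carrier_mat d d" and Q: "Q \<in> carrier_mat d d"
    and P': "P' \<in> carrier_mat d' d'" and Q': "Q' \<in> carrier_mat d' d'"
    and "(P * Q = - (Q * P) \<and> P' * Q' = - (Q' * P')) \<or> (P * Q = Q * P \<and> P' * Q' = Q' * P')"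
  shows "kron (conj_mat P) P' * kron (conj_mat Q) Q' = kron (conj_mat Q) Q' * kron (conj_mat P) P'"
proof -
  have "kron (conj_mat P) P' * kron (conj_mat Q) Q' = kron (conj_mat (P * Q)) (P' * Q')"
    using kron_mult[OF conj_mat_carrier[OF P] conj_mat_carrier[OF Q] P' Q'] conj_mat_mult[OF P Q]
    by simp
  moreover have "kron (conj_mat Q) Q' * kron (conj_mat P) P' = kron (conj_mat (Q * P)) (Q' * P')"
    using kron_mult[OF conj_mat_carrier[OF Q] conj_mat_carrier[OF P] Q' P'] conj_mat_mult[OF Q P]
    by simp
  ultimately show ?thesis using assms(5) by (auto simp: conj_mat_uminus kron_uminus_uminus)
qed

section \<open>Joint eigenprojections of commuting involutions\<close>

lemma hermitian_mat_mult:
  assumes "hermitian_mat N A" "hermitian_mat N B" "A * B = B * A"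
  shows "hermitian_mat N (A * B)"
  unfolding hermitian_mat_def
proof (intro conjI allI impI)
  have A: "A \<in> carrier_mat N N" and B: "B \<in> carrier_mat N N" using assms hermitian_matD(1) by auto
  then show "A * B \<in> carrier_mat N N" by simp
  fix i j assume i: "i < N" and j: "j < N"
  have "(A * B) $$ (i, j) = (\<Sum>k<N. A $$ (i, k) * B $$ (k, j))"
    by (rule mat_mult_entry[OF A B i j])
  also have "\<dots> = (\<Sum>k<N. cnj (B $$ (j, k) * A $$ (k, i)))"
  proof (intro sum.cong refl)
    fix k assume "k \<in> {..<N}"
    then have "A $$ (i, k) = cnj (A $$ (k, i))" "B $$ (k, j) = cnj (B $$ (j, k))"
      using i j hermitian_matD(2)[OF assms(1)] hermitian_matD(2)[OF assms(2)] by blast+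
    then show "A $$ (i, k) * B $$ (k, j) = cnj (B $$ (j, k) * A $$ (k, i))" by simp
  qed
  also have "\<dots> = cnj ((B * A) $$ (j, i))"
    unfolding mat_mult_entry[OF B A j i] by (simp add: cnj_sum)
  finally show "(A * B) $$ (i, j) = cnj ((A * B) $$ (j, i))" using assms(3) by simp
qed

definition bool_sign :: "bool \<Rightarrow> complex" where
  "bool_sign b = (if b then 1 else -1)"

definition eigenproj :: "nat \<Rightarrow> complex mat \<Rightarrow> complex \<Rightarrow> complex mat" where
  "eigenproj N U s = (1 / 2) \<cdot>\<^sub>m (1\<^sub>m N + s \<cdot>\<^sub>m U)"

fun joint_eigenproj :: "nat \<Rightarrow> complex mat list \<Rightarrow> bool list \<Rightarrow> complex mat" where
  "joint_eigenproj N (U # Us) (b # bs) = eigenproj N U (bool_sign b) * joint_eigenproj N Us bs"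
| "joint_eigenproj N _ _ = 1\<^sub>m N"

lemma eigenproj_carrier [simp]: "U \<in> carrier_mat N N \<Longrightarrow> eigenproj N U s \<in> carrier_mat N N"
  by (simp add: eigenproj_def)

lemma joint_eigenproj_carrier:
  "set Us \<subseteq> carrier_mat N N \<Longrightarrow> joint_eigenproj N Us bs \<in> carrier_mat N N"
proof (induction N Us bs rule: joint_eigenproj.induct)
  case (1 N U Us b bs)
  then show ?case using eigenproj_carrier[of U N] by (auto intro!: mult_carrier_mat[of _ N N _ N])
qed simp_all

lemma eigenproj_commute:
  assumes U: "U \<in> carrier_mat N N" and V: "V \<in> carrier_mat N N" and "U * V = V * U"
  shows "eigenproj N U s * V = V * eigenproj N U s"
proof -
  have "(1\<^sub>m N + s \<cdot>\<^sub>m U) * V = V + s \<cdot>\<^sub>m (U * V)"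
    using U V by (simp add: add_mult_distrib_mat[of _ N N _ _ N] mult_smult_assoc_mat[of _ N N _ N])
  then have 1: "eigenproj N U s * V = (1 / 2) \<cdot>\<^sub>m (V + s \<cdot>\<^sub>m (U * V))"
    unfolding eigenproj_def using U V by (simp add: mult_smult_assoc_mat[of _ N N _ N])
  have "V * (1\<^sub>m N + s \<cdot>\<^sub>m U) = V + s \<cdot>\<^sub>m (V * U)"
    using U V by (simp add: mult_add_distrib_mat[of _ N N _ N] mult_smult_distrib[of _ N N _ N])
  then have 2: "V * eigenproj N U s = (1 / 2) \<cdot>\<^sub>m (V + s \<cdot>\<^sub>m (V * U))"
    unfolding eigenproj_def using U V by (simp add: mult_smult_distrib[of _ N N _ N])
  show ?thesis using 1 2 assms(3) by simp
qed

lemma joint_eigenproj_commute: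
  assumes "set Us \<subseteq> carrier_mat N N" "V \<in> carrier_mat N N" "\<forall>U\<in>set Us. U * V = V * U"
  shows "joint_eigenproj N Us bs * V = V * joint_eigenproj N Us bs"
  using assms
proof (induction N Us bs rule: joint_eigenproj.induct)
  case (1 N U Us b bs)
  let ?E = "eigenproj N U (bool_sign b)" and ?J = "joint_eigenproj N Us bs"
  have U: "U \<in> carrier_mat N N" and J: "?J \<in> carrier_mat N N"
    using "1.prems"(1) joint_eigenproj_carrier by auto
  have "?E * ?J * V = ?E * (V * ?J)"
    using 1 U J by (simp add: assoc_mult_mat[of _ N N _ N _ N])
  also have "\<dots> = (?E * V) * ?J"
    using U J "1.prems"(2) by (simp add: assoc_mult_mat[of _ N N _ N _ N])
  also have "\<dots> = V * (?E * ?J)"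
    using eigenproj_commute[OF U "1.prems"(2)] "1.prems"(3) U J "1.prems"(2)
    by (simp add: assoc_mult_mat[of _ N N _ N _ N])
  finally show ?case by simp
qed simp_all

lemma eigenproj_hermitian:
  assumes "hermitian_mat N U" "s \<in> \<real>"
  shows "hermitian_mat N (eigenproj N U s)"
  unfolding hermitian_mat_def
proof (intro conjI allI impI)
  have U: "U \<in> carrier_mat N N" using hermitian_matD(1)[OF assms(1)] .
  then show "eigenproj N U s \<in> carrier_mat N N" by simp
  fix i j assume ij: "i < N" "j < N"
  have "U $$ (i, j) = cnj (U $$ (j, i))" using hermitian_matD(2)[OF assms(1) ij] .
  moreover have "cnj s = s" using assms(2) by (simp add: Reals_cnj_iff)
  ultimately show "eigenproj N U s $$ (i, j) = cnj (eigenproj N U s $$ (j, i))"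
    using U ij by (simp add: eigenproj_def)
qed

lemma smult_smult_mat: "a \<cdot>\<^sub>m (b \<cdot>\<^sub>m A) = (a * b) \<cdot>\<^sub>m (A :: complex mat)"
  by (rule eq_matI) auto

lemma eigenproj_idem:
  assumes U: "U \<in> carrier_mat N N" and UU: "U * U = 1\<^sub>m N" and s: "s * s = 1"
  shows "eigenproj N U s * eigenproj N U s = eigenproj N U s"
proof -
  have e1: "(1\<^sub>m N + s \<cdot>\<^sub>m U) * (1\<^sub>m N + s \<cdot>\<^sub>m U) =
      (1\<^sub>m N + s \<cdot>\<^sub>m U) + s \<cdot>\<^sub>m (U * (1\<^sub>m N + s \<cdot>\<^sub>m U))"
    using U by (simp add: add_mult_distrib_mat[of _ N N _ _ N] mult_smult_assoc_mat[of _ N N _ N])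
  have e2: "U * (1\<^sub>m N + s \<cdot>\<^sub>m U) = U + s \<cdot>\<^sub>m 1\<^sub>m N"
    using U UU by (simp add: mult_add_distrib_mat[of _ N N _ N] mult_smult_distrib[of _ N N _ N])
  have e3: "(1\<^sub>m N + s \<cdot>\<^sub>m U) + s \<cdot>\<^sub>m (U + s \<cdot>\<^sub>m 1\<^sub>m N) = 2 \<cdot>\<^sub>m (1\<^sub>m N + s \<cdot>\<^sub>m U)"
  proof (rule eq_matI)
    fix i j assume "i < dim_row (2 \<cdot>\<^sub>m (1\<^sub>m N + s \<cdot>\<^sub>m U))" "j < dim_col (2 \<cdot>\<^sub>m (1\<^sub>m N + s \<cdot>\<^sub>m U))"
    then have ij: "i < N" "j < N" using U by auto
    have "s * (s * x) = x" for x using s by (simp add: mult.assoc[symmetric])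
    then show "((1\<^sub>m N + s \<cdot>\<^sub>m U) + s \<cdot>\<^sub>m (U + s \<cdot>\<^sub>m 1\<^sub>m N)) $$ (i, j) =
        (2 \<cdot>\<^sub>m (1\<^sub>m N + s \<cdot>\<^sub>m U)) $$ (i, j)"
      using U ij by (simp add: distrib_left)
  qed (use U in auto)
  have "(1\<^sub>m N + s \<cdot>\<^sub>m U) * (1\<^sub>m N + s \<cdot>\<^sub>m U) = 2 \<cdot>\<^sub>m (1\<^sub>m N + s \<cdot>\<^sub>m U)"
    using e1 e2 e3 by simp
  then show ?thesis unfolding eigenproj_def using U
    by (simp add: mult_smult_assoc_mat[of _ N N _ N] mult_smult_distrib[of _ N N _ N] smult_smult_mat)
qed

lemma joint_eigenproj_hermitian_idem:
  assumes "\<forall>U\<in>set Us. hermitian_mat N U \<and> U * U = 1\<^sub>m N" "\<forall>U\<in>set Us. \<forall>V\<in>set Us. U * V = V * U"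
  shows "hermitian_mat N (joint_eigenproj N Us bs) \<and>
         joint_eigenproj N Us bs * joint_eigenproj N Us bs = joint_eigenproj N Us bs"
  using assms
proof (induction N Us bs rule: joint_eigenproj.induct)
  case (1 N U Us b bs)
  let ?E = "eigenproj N U (bool_sign b)" and ?J = "joint_eigenproj N Us bs"
  have U: "U \<in> carrier_mat N N" "hermitian_mat N U" "U * U = 1\<^sub>m N"
    using "1.prems"(1) hermitian_matD(1) by auto
  have Us: "set Us \<subseteq> carrier_mat N N" using "1.prems"(1) hermitian_matD(1) by auto
  have E: "?E \<in> carrier_mat N N" "hermitian_mat N ?E" "?E * ?E = ?E"
    using U eigenproj_hermitian eigenproj_idem by (auto simp: bool_sign_def)
  have J: "?J \<in> carrier_mat N N" "hermitian_mat N ?J" "?J * ?J = ?J"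
    using 1 joint_eigenproj_carrier[OF Us] by auto
  have "V * ?E = ?E * V" if "V \<in> set Us" for V
    using eigenproj_commute[OF U(1), of V] that Us "1.prems"(2) by auto
  then have EJ: "?E * ?J = ?J * ?E"
    using joint_eigenproj_commute[OF Us E(1)] by auto
  have "?E * ?J * (?E * ?J) = ?E * ((?J * ?E) * ?J)"
    using E(1) J(1) by (simp add: assoc_mult_mat[of _ N N _ N _ N])
  also have "\<dots> = ?E * ((?E * ?J) * ?J)"
    by (simp only: EJ)
  also have "\<dots> = (?E * ?E) * (?J * ?J)"
    using E(1) J(1) by (simp add: assoc_mult_mat[of _ N N _ N _ N])
  finally show ?case using hermitian_mat_mult[OF E(2) J(2) EJ] E J by simp
qed (simp_all add: hermitian_mat_def)

definition sign_patterns :: "nat \<Rightarrow> bool list set" where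
  "sign_patterns k = {bs. length bs = k}"

lemma finite_sign_patterns [simp]: "finite (sign_patterns k)"
  using finite_lists_length_eq[of "UNIV :: bool set" k] by (simp add: sign_patterns_def)

lemma sum_sign_patterns_Suc:
  "(\<Sum>bs\<in>sign_patterns (Suc k). f bs) = (\<Sum>b\<in>UNIV. \<Sum>bs\<in>sign_patterns k. f (b # bs))"
proof -
  have "sign_patterns (Suc k) = (\<lambda>(b, bs). b # bs) ` (UNIV \<times> sign_patterns k)"
    by (auto simp: sign_patterns_def image_iff length_Suc_conv)
  moreover have "inj_on (\<lambda>(b, bs). b # bs) (UNIV \<times> sign_patterns k)" by (auto simp: inj_on_def)
  ultimately show ?thesis by (simp add: sum.reindex sum.cartesian_product case_prod_unfold)
qed

lemma sum_swap3:
  "(\<Sum>a\<in>A. \<Sum>b\<in>B. \<Sum>k\<in>C. f a b k) = (\<Sum>k\<in>C. \<Sum>a\<in>A. \<Sum>b\<in>B. f a b k)"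
proof -
  have "(\<Sum>a\<in>A. \<Sum>b\<in>B. \<Sum>k\<in>C. f a b k) = (\<Sum>a\<in>A. \<Sum>k\<in>C. \<Sum>b\<in>B. f a b k)"
    by (intro sum.cong refl sum.swap)
  also have "\<dots> = (\<Sum>k\<in>C. \<Sum>a\<in>A. \<Sum>b\<in>B. f a b k)" by (rule sum.swap)
  finally show ?thesis .
qed

lemma sum_product_swap:
  fixes f g :: "_ \<Rightarrow> _ \<Rightarrow> 'a::comm_semiring_0"
  shows "(\<Sum>a\<in>A. \<Sum>b\<in>B. \<Sum>k\<in>C. f a k * g b k) = (\<Sum>k\<in>C. (\<Sum>a\<in>A. f a k) * (\<Sum>b\<in>B. g b k))"
  unfolding sum_product by (rule sum_swap3)

text \<open>Positions beyond the pattern get sign \<open>1\<close>, so that a single induction yields both the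
  resolution of the identity and the signed sums recovering each involution.\<close>
definition sign_at :: "bool list \<Rightarrow> nat \<Rightarrow> complex" where
  "sign_at bs p = (if p < length bs then bool_sign (bs ! p) else 1)"

lemma sum_eigenproj:
  assumes "U \<in> carrier_mat N N" "i < N" "k < N"
  shows "(\<Sum>b\<in>UNIV. eigenproj N U (bool_sign b) $$ (i, k)) = 1\<^sub>m N $$ (i, k)"
    and "(\<Sum>b\<in>UNIV. bool_sign b * eigenproj N U (bool_sign b) $$ (i, k)) = U $$ (i, k)"
  using assms by (simp_all add: UNIV_bool eigenproj_def bool_sign_def field_simps)

lemma joint_eigenproj_sign_sum:
  assumes "set Us \<subseteq> carrier_mat N N" "i < N" "j < N"
  shows "(\<Sum>bs\<in>sign_patterns (length Us). sign_at bs p * joint_eigenproj N Us bs $$ (i, j)) =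
         (if p < length Us then Us ! p else 1\<^sub>m N) $$ (i, j)"
  using assms
proof (induction Us arbitrary: i j p)
  case Nil
  have "sign_patterns 0 = {[]}" by (auto simp: sign_patterns_def)
  then show ?case by (simp add: sign_at_def)
next
  case (Cons U Us)
  have U: "U \<in> carrier_mat N N" and Us: "set Us \<subseteq> carrier_mat N N" using Cons.prems by auto
  txt \<open>The sign at position \<open>p\<close> is carried by the first factor if \<open>p = 0\<close> and by the tail
    otherwise.\<close>
  define w where "w b = (if p = 0 then bool_sign b else 1)" for b
  define q where "q = (if p = 0 then length Us else p - 1)"
  define X where "X = (if p = 0 then U else 1\<^sub>m N)"
  define Y where "Y = (if q < length Us then Us ! q else 1\<^sub>m N)"
  let ?E = "\<lambda>b. eigenproj N U (bool_sign b)" and ?J = "joint_eigenproj N Us"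
  have X: "X \<in> carrier_mat N N" and Y: "Y \<in> carrier_mat N N"
    using U Us by (auto simp: X_def Y_def)
  have sign: "sign_at (b # bs) p = w b * sign_at bs q" if "bs \<in> sign_patterns (length Us)" for b bs
    using that by (cases p) (auto simp: sign_at_def w_def q_def sign_patterns_def)
  have "(\<Sum>bs\<in>sign_patterns (length (U # Us)). sign_at bs p * joint_eigenproj N (U # Us) bs $$ (i, j))
      = (\<Sum>b\<in>UNIV. \<Sum>bs\<in>sign_patterns (length Us). sign_at (b # bs) p * (?E b * ?J bs) $$ (i, j))"
    by (simp add: sum_sign_patterns_Suc)
  also have "\<dots> = (\<Sum>b\<in>UNIV. \<Sum>bs\<in>sign_patterns (length Us). \<Sum>k<N.
           (w b * ?E b $$ (i, k)) * (sign_at bs q * ?J bs $$ (k, j)))"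
  proof (intro sum.cong refl)
    fix b bs assume "bs \<in> sign_patterns (length Us)"
    moreover have "(?E b * ?J bs) $$ (i, j) = (\<Sum>k<N. ?E b $$ (i, k) * ?J bs $$ (k, j))"
      using mat_mult_entry[OF eigenproj_carrier[OF U] joint_eigenproj_carrier[OF Us] Cons.prems(2,3)] .
    ultimately show "sign_at (b # bs) p * (?E b * ?J bs) $$ (i, j) =
        (\<Sum>k<N. (w b * ?E b $$ (i, k)) * (sign_at bs q * ?J bs $$ (k, j)))"
      using sign by (simp add: sum_distrib_left ac_simps)
  qed
  also have "\<dots> = (\<Sum>k<N. (\<Sum>b\<in>UNIV. w b * ?E b $$ (i, k)) *
                          (\<Sum>bs\<in>sign_patterns (length Us). sign_at bs q * ?J bs $$ (k, j)))"
    by (rule sum_product_swap)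
  also have "\<dots> = (\<Sum>k<N. X $$ (i, k) * Y $$ (k, j))"
    using Cons.IH[OF Us] Cons.prems sum_eigenproj[OF U]
    by (intro sum.cong refl) (simp add: w_def X_def Y_def)
  also have "\<dots> = (X * Y) $$ (i, j)"
    using mat_mult_entry[OF X Y Cons.prems(2,3)] by simp
  also have "X * Y = (if p < length (U # Us) then (U # Us) ! p else 1\<^sub>m N)"
    using U Y by (cases p) (auto simp: X_def Y_def q_def)
  finally show ?case .
qed

section \<open>Positive forms and density matrices\<close>

definition psd_form :: "nat \<Rightarrow> (nat \<Rightarrow> nat \<Rightarrow> complex) \<Rightarrow> bool" where
  "psd_form m f \<longleftrightarrow> (\<forall>v :: nat \<Rightarrow> complex.
      Im (\<Sum>i<m. \<Sum>j<m. cnj (v i) * f i j * v j) = 0 \<and> Re (\<Sum>i<m. \<Sum>j<m. cnj (v i) * f i j * v j) \<ge> 0)"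

lemma density_matrix_psd_form: "density_matrix d \<rho> \<Longrightarrow> psd_form d (\<lambda>i j. \<rho> $$ (i, j))"
  unfolding density_matrix_def psd_form_def Let_def by blast

lemma density_matrixD:
  assumes "density_matrix d \<rho>"
  shows "\<rho> \<in> carrier_mat d d" "i < d \<Longrightarrow> j < d \<Longrightarrow> \<rho> $$ (i, j) = cnj (\<rho> $$ (j, i))"
    and "(\<Sum>i<d. \<rho> $$ (i, i)) = 1"
proof -
  note A = assms[unfolded density_matrix_def]
  show \<rho>: "\<rho> \<in> carrier_mat d d" using conjunct1[OF A] .
  show "i < d \<Longrightarrow> j < d \<Longrightarrow> \<rho> $$ (i, j) = cnj (\<rho> $$ (j, i))" using conjunct1[OF conjunct2[OF A]] by blast
  show "(\<Sum>i<d. \<rho> $$ (i, i)) = 1" using conjunct2[OF conjunct2[OF conjunct2[OF A]]] \<rho>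
    by (simp add: mat_trace_def)
qed

lemma sum_mult_delta_left:
  assumes "finite A"
  shows "(\<Sum>k\<in>A. (if i = k then 1 else 0) * f k) = (if i \<in> A then f i else (0::complex))"
proof -
  have "(\<Sum>k\<in>A. (if i = k then 1 else 0) * f k) = (\<Sum>k\<in>A. if i = k then f k else 0)"
    by (rule sum.cong) auto
  then show ?thesis using assms by simp
qed

lemma sum_mult_delta_right:
  assumes "finite A"
  shows "(\<Sum>k\<in>A. f k * (if k = j then 1 else 0)) = (if j \<in> A then f j else (0::complex))"
proof -
  have "(\<Sum>k\<in>A. f k * (if k = j then 1 else 0)) = (\<Sum>k\<in>A. if k = j then f k else 0)"
    by (rule sum.cong) auto
  then show ?thesis using assms by simp
qed

lemma hermitian_involution_gram:
  assumes X: "hermitian_mat m X" and XX: "X * X = 1\<^sub>m m" and e: "e = 1 \<or> e = -1"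
    and a: "a < m" and c: "c < m"
  defines "v \<equiv> \<lambda>k c. (if c = k then 1 else 0) + e * X $$ (c, k)"
  shows "(\<Sum>k<m. v k c * cnj (v k a)) = 2 * (if c = a then 1 else 0) + 2 * e * X $$ (c, a)"
proof -
  have Xc: "X \<in> carrier_mat m m" using hermitian_matD(1)[OF X] .
  have e': "cnj e = e" "e * e = 1" using e by auto
  have "v k c * cnj (v k a) = (if c = k then 1 else 0) * (if k = a then 1 else 0)
      + e * ((if c = k then 1 else 0) * X $$ (k, a)) + e * (X $$ (c, k) * (if k = a then 1 else 0))
      + (e * e) * (X $$ (c, k) * X $$ (k, a))" if "k < m" for k
  proof -
    have "cnj (X $$ (a, k)) = X $$ (k, a)" using hermitian_matD(2)[OF X that a] by simp
    then show ?thesis unfolding v_def using e' by (auto simp: algebra_simps)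
  qed
  then have "(\<Sum>k<m. v k c * cnj (v k a)) = (\<Sum>k<m. (if c = k then 1 else 0) * (if k = a then 1 else 0))
      + e * (\<Sum>k<m. (if c = k then 1 else 0) * X $$ (k, a))
      + e * (\<Sum>k<m. X $$ (c, k) * (if k = a then 1 else 0)) + (e * e) * (\<Sum>k<m. X $$ (c, k) * X $$ (k, a))"
    by (simp add: sum.distrib sum_distrib_left)
  also have "(\<Sum>k<m. X $$ (c, k) * X $$ (k, a)) = (if c = a then 1 else 0)"
    using mat_mult_entry[OF Xc Xc c a] XX a c by simp
  finally show ?thesis using a c e' by (simp add: sum_mult_delta_left sum_mult_delta_right)
qed

text \<open>The operators \<open>1 \<plusminus> X\<close> are positive; the proof tests \<open>f\<close> against their columns.\<close>
lemma psd_form_trace_involution_bound: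
  assumes f: "psd_form m f" and X: "hermitian_mat m X" and XX: "X * X = 1\<^sub>m m"
  shows "\<bar>Re (\<Sum>a<m. \<Sum>c<m. f a c * X $$ (c, a))\<bar> \<le> Re (\<Sum>a<m. f a a)"
proof -
  have "Re (\<Sum>a<m. f a a) + Re e * Re (\<Sum>a<m. \<Sum>c<m. f a c * X $$ (c, a)) \<ge> 0"
    if e: "e = 1 \<or> e = -1" for e :: complex
  proof -
    define v where "v k c = (if c = k then 1 else 0) + e * X $$ (c, k)" for k c
    have "(\<Sum>k<m. \<Sum>a<m. \<Sum>c<m. cnj (v k a) * f a c * v k c)
        = (\<Sum>a<m. \<Sum>c<m. \<Sum>k<m. cnj (v k a) * f a c * v k c)"
      by (rule sum_swap3[symmetric])
    also have "\<dots> = (\<Sum>a<m. \<Sum>c<m. 2 * (f a c * (if c = a then 1 else 0)) + 2 * e * (f a c * X $$ (c, a)))"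
    proof (intro sum.cong refl)
      fix a c assume "a \<in> {..<m}" "c \<in> {..<m}"
      then have "(\<Sum>k<m. v k c * cnj (v k a)) = 2 * (if c = a then 1 else 0) + 2 * e * X $$ (c, a)"
        unfolding v_def by (intro hermitian_involution_gram[OF X XX e]) auto
      then show "(\<Sum>k<m. cnj (v k a) * f a c * v k c) =
          2 * (f a c * (if c = a then 1 else 0)) + 2 * e * (f a c * X $$ (c, a))"
        by (simp add: sum_distrib_left[symmetric] algebra_simps)
    qed
    also have "\<dots> = 2 * (\<Sum>a<m. f a a) + 2 * e * (\<Sum>a<m. \<Sum>c<m. f a c * X $$ (c, a))"
      by (simp add: sum.distrib sum_distrib_left[symmetric] sum_mult_delta_right)
    finally have eq: "(\<Sum>k<m. \<Sum>a<m. \<Sum>c<m. cnj (v k a) * f a c * v k c) =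
        2 * (\<Sum>a<m. f a a) + 2 * e * (\<Sum>a<m. \<Sum>c<m. f a c * X $$ (c, a))" .
    have "Re (\<Sum>k<m. \<Sum>a<m. \<Sum>c<m. cnj (v k a) * f a c * v k c) \<ge> 0"
      using f unfolding psd_form_def by (simp add: Re_sum sum_nonneg)
    then show ?thesis unfolding eq using e by auto
  qed
  from this[of 1] this[of "-1"] show ?thesis by auto
qed

lemma expect_involution_bound:
  assumes \<rho>: "density_matrix d \<rho>" and P: "hermitian_mat d P" and PP: "P * P = 1\<^sub>m d"
  shows "\<bar>expect \<rho> P\<bar> \<le> 1"
proof -
  have "\<bar>Re (\<Sum>a<d. \<Sum>c<d. \<rho> $$ (a, c) * P $$ (c, a))\<bar> \<le> Re (\<Sum>a<d. \<rho> $$ (a, a))"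
    by (rule psd_form_trace_involution_bound[OF density_matrix_psd_form[OF \<rho>] P PP])
  then show ?thesis
    unfolding expect_def mat_trace_mult[OF density_matrixD(1)[OF \<rho>] hermitian_matD(1)[OF P]]
    using density_matrixD(3)[OF \<rho>] by simp
qed

lemma density_matrix_normalize:
  assumes f: "psd_form m f" and h: "\<And>a c. a < m \<Longrightarrow> c < m \<Longrightarrow> f a c = cnj (f c a)"
    and p: "p = Re (\<Sum>a<m. f a a)" and p0: "p > 0"
  shows "density_matrix m (mat m m (\<lambda>(a, c). f a c / complex_of_real p))"
  unfolding density_matrix_def Let_def
proof (intro conjI allI impI)
  let ?s = "mat m m (\<lambda>(a, c). f a c / complex_of_real p)"
  show "?s \<in> carrier_mat m m" by simp
  show "?s $$ (i, j) = cnj (?s $$ (j, i))" if "i < m" "j < m" for i j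
    using that h[of i j] by simp
  fix v :: "nat \<Rightarrow> complex"
  have "(\<Sum>i<m. \<Sum>j<m. cnj (v i) * ?s $$ (i, j) * v j) =
        (\<Sum>i<m. \<Sum>j<m. cnj (v i) * f i j * v j) / complex_of_real p"
    by (simp add: sum_divide_distrib)
  then show "Im (\<Sum>i<m. \<Sum>j<m. cnj (v i) * ?s $$ (i, j) * v j) = 0"
    "0 \<le> Re (\<Sum>i<m. \<Sum>j<m. cnj (v i) * ?s $$ (i, j) * v j)"
    using f p0 unfolding psd_form_def by (simp_all add: Im_divide_of_real Re_divide_of_real)
next
  let ?s = "mat m m (\<lambda>(a, c). f a c / complex_of_real p)"
  have "Im (f a a) = 0" if "a < m" for a
    using h[OF that that] by (metis Reals_cnj_iff complex_is_Real_iff)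
  then have "(\<Sum>a<m. f a a) = complex_of_real p"
    unfolding p by (intro complex_eqI) (simp_all add: Im_sum)
  then show "mat_trace ?s = 1"
    unfolding mat_trace_def using p0 by (simp add: sum_divide_distrib[symmetric])
qed

lemma expect_normalize:
  assumes "X \<in> carrier_mat m m"
  shows "expect (mat m m (\<lambda>(a, c). f a c / complex_of_real p)) X = Re (\<Sum>a<m. \<Sum>c<m. f a c * X $$ (c, a)) / p"
  unfolding expect_def mat_trace_mult[OF mat_carrier assms]
  by (simp add: sum_divide_distrib[symmetric] Re_divide_of_real)

section \<open>Partial traces against a state\<close>

text \<open>Entry \<open>(a, c)\<close> of the partial trace \<open>tr\<^sub>1 ((\<rho>\<^sup>T \<otimes> 1) M)\<close> over the first factor of
  \<open>\<complex>\<^sup>d \<otimes> \<complex>\<^sup>d'\<close>, with index \<open>x * d' + a\<close> for the basis vector \<open>e\<^sub>x \<otimes> e\<^sub>a\<close>.\<close>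
definition partial_trace_with :: "nat \<Rightarrow> nat \<Rightarrow> complex mat \<Rightarrow> complex mat \<Rightarrow> nat \<Rightarrow> nat \<Rightarrow> complex" where
  "partial_trace_with d d' \<rho> M a c = (\<Sum>x<d. \<Sum>y<d. \<rho> $$ (x, y) * M $$ (x * d' + a, y * d' + c))"

lemma hermitian_idem_entry:
  assumes "hermitian_mat N M" "M * M = M" "p < N" "q < N"
  shows "M $$ (p, q) = (\<Sum>r<N. cnj (M $$ (r, p)) * M $$ (r, q))"
proof -
  have M: "M \<in> carrier_mat N N" using hermitian_matD(1)[OF assms(1)] .
  have "M $$ (p, q) = (\<Sum>r<N. M $$ (p, r) * M $$ (r, q))"
    using mat_mult_entry[OF M M assms(3,4)] assms(2) by simp
  also have "\<dots> = (\<Sum>r<N. cnj (M $$ (r, p)) * M $$ (r, q))"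
  proof (intro sum.cong refl)
    fix r assume "r \<in> {..<N}"
    then have "M $$ (p, r) = cnj (M $$ (r, p))" using hermitian_matD(2)[OF assms(1) assms(3)] by blast
    then show "M $$ (p, r) * M $$ (r, q) = cnj (M $$ (r, p)) * M $$ (r, q)" by simp
  qed
  finally show ?thesis .
qed

lemma sum_reorder5:
  "(\<Sum>a\<in>A. \<Sum>c\<in>C. \<Sum>x\<in>X. \<Sum>y\<in>Y. \<Sum>r\<in>R. F a c x y r) =
   (\<Sum>r\<in>R. \<Sum>x\<in>X. \<Sum>y\<in>Y. \<Sum>a\<in>A. \<Sum>c\<in>C. F a c x y r)"
proof -
  have "(\<Sum>a\<in>A. \<Sum>c\<in>C. \<Sum>x\<in>X. \<Sum>y\<in>Y. \<Sum>r\<in>R. F a c x y r) =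
        (\<Sum>a\<in>A. \<Sum>c\<in>C. \<Sum>r\<in>R. \<Sum>x\<in>X. \<Sum>y\<in>Y. F a c x y r)"
    by (intro sum.cong refl) (rule sum_swap3)
  also have "\<dots> = (\<Sum>r\<in>R. \<Sum>a\<in>A. \<Sum>c\<in>C. \<Sum>x\<in>X. \<Sum>y\<in>Y. F a c x y r)"
    by (rule sum_swap3)
  also have "\<dots> = (\<Sum>r\<in>R. \<Sum>x\<in>X. \<Sum>a\<in>A. \<Sum>c\<in>C. \<Sum>y\<in>Y. F a c x y r)"
    by (intro sum.cong refl) (rule sum_swap3)
  also have "\<dots> = (\<Sum>r\<in>R. \<Sum>x\<in>X. \<Sum>y\<in>Y. \<Sum>a\<in>A. \<Sum>c\<in>C. F a c x y r)"
    by (intro sum.cong refl) (rule sum_swap3)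
  finally show ?thesis .
qed

text \<open>Writing \<open>M = M\<^sup>* M\<close>, the quadratic form of the partial trace becomes a sum of
  quadratic forms of \<open>\<rho>\<close>.\<close>
lemma partial_trace_with_psd:
  assumes \<rho>: "density_matrix d \<rho>" and M: "hermitian_mat (d * d') M" "M * M = M"
  shows "psd_form d' (partial_trace_with d d' \<rho> M)"
  unfolding psd_form_def
proof
  fix v :: "nat \<Rightarrow> complex"
  define w where "w r y = (\<Sum>c<d'. M $$ (r, y * d' + c) * v c)" for r y
  have "(\<Sum>a<d'. \<Sum>c<d'. cnj (v a) * partial_trace_with d d' \<rho> M a c * v c) =
      (\<Sum>a<d'. \<Sum>c<d'. \<Sum>x<d. \<Sum>y<d. \<Sum>r<d * d'.
         cnj (M $$ (r, x * d' + a)) * cnj (v a) * \<rho> $$ (x, y) * (M $$ (r, y * d' + c) * v c))"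
  proof (intro sum.cong refl)
    fix a c assume "a \<in> {..<d'}" "c \<in> {..<d'}"
    then have "partial_trace_with d d' \<rho> M a c =
        (\<Sum>x<d. \<Sum>y<d. \<rho> $$ (x, y) * (\<Sum>r<d * d'. cnj (M $$ (r, x * d' + a)) * M $$ (r, y * d' + c)))"
      unfolding partial_trace_with_def
      by (intro sum.cong refl, subst hermitian_idem_entry[OF M]) (auto intro: mult_add_less_mult)
    then show "cnj (v a) * partial_trace_with d d' \<rho> M a c * v c = (\<Sum>x<d. \<Sum>y<d. \<Sum>r<d * d'.
        cnj (M $$ (r, x * d' + a)) * cnj (v a) * \<rho> $$ (x, y) * (M $$ (r, y * d' + c) * v c))"
      by (simp add: sum_distrib_left sum_distrib_right ac_simps)
  qed
  also have "\<dots> = (\<Sum>r<d * d'. \<Sum>x<d. \<Sum>y<d. \<Sum>a<d'. \<Sum>c<d'.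
         cnj (M $$ (r, x * d' + a)) * cnj (v a) * \<rho> $$ (x, y) * (M $$ (r, y * d' + c) * v c))"
    by (rule sum_reorder5)
  also have "\<dots> = (\<Sum>r<d * d'. \<Sum>x<d. \<Sum>y<d. cnj (w r x) * \<rho> $$ (x, y) * w r y)"
    unfolding w_def by (simp add: sum_distrib_left sum_distrib_right cnj_sum ac_simps)
  finally show "Im (\<Sum>a<d'. \<Sum>c<d'. cnj (v a) * partial_trace_with d d' \<rho> M a c * v c) = 0 \<and>
      0 \<le> Re (\<Sum>a<d'. \<Sum>c<d'. cnj (v a) * partial_trace_with d d' \<rho> M a c * v c)"
    using density_matrix_psd_form[OF \<rho>] unfolding psd_form_def by (simp add: Im_sum Re_sum sum_nonneg)
qed

lemma partial_trace_with_hermitian: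
  assumes \<rho>: "density_matrix d \<rho>" and M: "hermitian_mat (d * d') M" and "a < d'" "c < d'"
  shows "partial_trace_with d d' \<rho> M a c = cnj (partial_trace_with d d' \<rho> M c a)"
proof -
  have "cnj (partial_trace_with d d' \<rho> M c a) =
      (\<Sum>x<d. \<Sum>y<d. cnj (\<rho> $$ (x, y)) * cnj (M $$ (x * d' + c, y * d' + a)))"
    unfolding partial_trace_with_def by (simp add: cnj_sum)
  also have "\<dots> = (\<Sum>x<d. \<Sum>y<d. \<rho> $$ (y, x) * M $$ (y * d' + a, x * d' + c))"
  proof (intro sum.cong refl)
    fix x y assume "x \<in> {..<d}" "y \<in> {..<d}"
    then have xy: "x < d" "y < d" by auto
    then have "y * d' + a < d * d'" "x * d' + c < d * d'"
      using assms(3,4) by (auto intro: mult_add_less_mult)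
    note density_matrixD(2)[OF \<rho> xy(2,1)] hermitian_matD(2)[OF M this]
    then show "cnj (\<rho> $$ (x, y)) * cnj (M $$ (x * d' + c, y * d' + a)) = \<rho> $$ (y, x) * M $$ (y * d' + a, x * d' + c)"
      by simp
  qed
  also have "\<dots> = partial_trace_with d d' \<rho> M a c"
    unfolding partial_trace_with_def by (rule sum.swap)
  finally show ?thesis by simp
qed

lemma partial_trace_with_sum:
  "(\<Sum>b\<in>B. g b * partial_trace_with d d' \<rho> (M b) a c) =
   (\<Sum>x<d. \<Sum>y<d. \<rho> $$ (x, y) * (\<Sum>b\<in>B. g b * M b $$ (x * d' + a, y * d' + c)))"
proof -
  have "(\<Sum>b\<in>B. g b * partial_trace_with d d' \<rho> (M b) a c) =
      (\<Sum>b\<in>B. \<Sum>x<d. \<Sum>y<d. g b * (\<rho> $$ (x, y) * M b $$ (x * d' + a, y * d' + c)))"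
    unfolding partial_trace_with_def by (simp add: sum_distrib_left)
  also have "\<dots> = (\<Sum>x<d. \<Sum>y<d. \<Sum>b\<in>B. g b * (\<rho> $$ (x, y) * M b $$ (x * d' + a, y * d' + c)))"
    by (rule sum_swap3[symmetric])
  also have "\<dots> = (\<Sum>x<d. \<Sum>y<d. \<rho> $$ (x, y) * (\<Sum>b\<in>B. g b * M b $$ (x * d' + a, y * d' + c)))"
    by (simp add: sum_distrib_left mult.left_commute)
  finally show ?thesis .
qed

lemma partial_trace_with_one:
  assumes \<rho>: "density_matrix d \<rho>" and "a < d'" "c < d'"
  shows "partial_trace_with d d' \<rho> (1\<^sub>m (d * d')) a c = 1\<^sub>m d' $$ (a, c)"
proof -
  have "partial_trace_with d d' \<rho> (1\<^sub>m (d * d')) a c = (\<Sum>x<d. \<rho> $$ (x, x) * 1\<^sub>m d' $$ (a, c))"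
  proof (unfold partial_trace_with_def, intro sum.cong refl)
    fix x assume x: "x \<in> {..<d}"
    have "(\<Sum>y<d. \<rho> $$ (x, y) * 1\<^sub>m (d * d') $$ (x * d' + a, y * d' + c)) =
        (\<Sum>y<d. if y = x then \<rho> $$ (x, y) * 1\<^sub>m d' $$ (a, c) else 0)"
      using x assms(2,3) by (intro sum.cong refl) (auto simp: mult_add_less_mult mult_add_eq_mult_add_iff)
    then show "(\<Sum>y<d. \<rho> $$ (x, y) * 1\<^sub>m (d * d') $$ (x * d' + a, y * d' + c)) = \<rho> $$ (x, x) * 1\<^sub>m d' $$ (a, c)"
      using x by simp
  qed
  then show ?thesis using density_matrixD(3)[OF \<rho>] by (simp add: sum_distrib_right[symmetric])
qed

lemma partial_trace_with_kron_conj: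
  assumes \<rho>: "density_matrix d \<rho>" and P: "hermitian_mat d P" and P': "P' \<in> carrier_mat d' d'"
    and "a < d'" "c < d'"
  shows "partial_trace_with d d' \<rho> (kron (conj_mat P) P') a c = mat_trace (\<rho> * P) * P' $$ (a, c)"
proof -
  have Pc: "P \<in> carrier_mat d d" using hermitian_matD(1)[OF P] .
  have "partial_trace_with d d' \<rho> (kron (conj_mat P) P') a c = (\<Sum>x<d. \<Sum>y<d. \<rho> $$ (x, y) * P $$ (y, x) * P' $$ (a, c))"
  proof (unfold partial_trace_with_def, intro sum.cong refl)
    fix x y assume "x \<in> {..<d}" "y \<in> {..<d}"
    then have "kron (conj_mat P) P' $$ (x * d' + a, y * d' + c) = cnj (P $$ (x, y)) * P' $$ (a, c)"
      using kron_index_mult_add[OF conj_mat_carrier[OF Pc] P'] assms(4,5) Pc by (simp add: conj_mat_def)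
    moreover have "cnj (P $$ (x, y)) = P $$ (y, x)"
      using hermitian_matD(2)[OF P, of y x] \<open>x \<in> {..<d}\<close> \<open>y \<in> {..<d}\<close> by simp
    ultimately show "\<rho> $$ (x, y) * kron (conj_mat P) P' $$ (x * d' + a, y * d' + c) =
        \<rho> $$ (x, y) * P $$ (y, x) * P' $$ (a, c)" by simp
  qed
  also have "\<dots> = mat_trace (\<rho> * P) * P' $$ (a, c)"
    unfolding mat_trace_mult[OF density_matrixD(1)[OF \<rho>] Pc] by (simp add: sum_distrib_right)
  finally show ?thesis .
qed

lemma sum_partial_trace_joint_eigenproj:
  assumes "set Us \<subseteq> carrier_mat (d * d') (d * d')" "a < d'" "c < d'"
  shows "(\<Sum>bs\<in>sign_patterns (length Us). sign_at bs p * partial_trace_with d d' \<rho> (joint_eigenproj (d * d') Us bs) a c)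
       = partial_trace_with d d' \<rho> (if p < length Us then Us ! p else 1\<^sub>m (d * d')) a c"
proof -
  have "(\<Sum>bs\<in>sign_patterns (length Us). sign_at bs p * partial_trace_with d d' \<rho> (joint_eigenproj (d * d') Us bs) a c)
      = (\<Sum>x<d. \<Sum>y<d. \<rho> $$ (x, y) * (\<Sum>bs\<in>sign_patterns (length Us).
            sign_at bs p * joint_eigenproj (d * d') Us bs $$ (x * d' + a, y * d' + c)))"
    by (rule partial_trace_with_sum)
  also have "\<dots> = partial_trace_with d d' \<rho> (if p < length Us then Us ! p else 1\<^sub>m (d * d')) a c"
    unfolding partial_trace_with_def
    using joint_eigenproj_sign_sum[OF assms(1) mult_add_less_mult mult_add_less_mult] assms(2,3)
    by (intro sum.cong refl) simp
  finally show ?thesis .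
qed

lemma sum_partial_trace_joint_eigenproj_trace:
  assumes \<rho>: "density_matrix d \<rho>" and "set Us \<subseteq> carrier_mat (d * d') (d * d')"
  shows "(\<Sum>bs\<in>sign_patterns (length Us). \<Sum>a<d'. partial_trace_with d d' \<rho> (joint_eigenproj (d * d') Us bs) a a)
       = of_nat d'"
proof -
  have "(\<Sum>bs\<in>sign_patterns (length Us). \<Sum>a<d'. partial_trace_with d d' \<rho> (joint_eigenproj (d * d') Us bs) a a)
      = (\<Sum>a<d'. \<Sum>bs\<in>sign_patterns (length Us).
           sign_at bs (length Us) * partial_trace_with d d' \<rho> (joint_eigenproj (d * d') Us bs) a a)"
    by (subst sum.swap) (simp add: sign_at_def sign_patterns_def)
  also have "\<dots> = (\<Sum>a<d'. 1\<^sub>m d' $$ (a, a))"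
    using sum_partial_trace_joint_eigenproj[OF assms(2)] partial_trace_with_one[OF \<rho>]
    by (intro sum.cong refl) simp
  finally show ?thesis by simp
qed

lemma sum_partial_trace_joint_eigenproj_signed:
  assumes \<rho>: "density_matrix d \<rho>" and Us: "set Us \<subseteq> carrier_mat (d * d') (d * d')"
    and p: "p < length Us" "Us ! p = kron (conj_mat P) P'"
    and P: "hermitian_mat d P" and P': "P' \<in> carrier_mat d' d'" "P' * P' = 1\<^sub>m d'"
  shows "(\<Sum>bs\<in>sign_patterns (length Us). Re (bool_sign (bs ! p)) *
           Re (\<Sum>a<d'. \<Sum>c<d'. partial_trace_with d d' \<rho> (joint_eigenproj (d * d') Us bs) a c * P' $$ (c, a)))
       = real d' * expect \<rho> P"
proof -
  let ?\<tau> = "\<lambda>bs. partial_trace_with d d' \<rho> (joint_eigenproj (d * d') Us bs)"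
  have "(\<Sum>bs\<in>sign_patterns (length Us). bool_sign (bs ! p) * (\<Sum>a<d'. \<Sum>c<d'. ?\<tau> bs a c * P' $$ (c, a)))
      = (\<Sum>a<d'. \<Sum>c<d'. (\<Sum>bs\<in>sign_patterns (length Us). sign_at bs p * ?\<tau> bs a c) * P' $$ (c, a))"
  proof -
    have "(\<Sum>bs\<in>sign_patterns (length Us). bool_sign (bs ! p) * (\<Sum>a<d'. \<Sum>c<d'. ?\<tau> bs a c * P' $$ (c, a)))
        = (\<Sum>bs\<in>sign_patterns (length Us). \<Sum>a<d'. \<Sum>c<d'. sign_at bs p * ?\<tau> bs a c * P' $$ (c, a))"
      using p(1) by (intro sum.cong refl) (simp add: sign_at_def sign_patterns_def sum_distrib_left mult.assoc)
    also have "\<dots> = (\<Sum>a<d'. \<Sum>c<d'. \<Sum>bs\<in>sign_patterns (length Us). sign_at bs p * ?\<tau> bs a c * P' $$ (c, a))"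
      by (rule sum_swap3[symmetric])
    finally show ?thesis by (simp add: sum_distrib_right)
  qed
  also have "\<dots> = (\<Sum>a<d'. \<Sum>c<d'. mat_trace (\<rho> * P) * (P' $$ (a, c) * P' $$ (c, a)))"
    using sum_partial_trace_joint_eigenproj[OF Us] partial_trace_with_kron_conj[OF \<rho> P P'(1)] p
    by (intro sum.cong refl) simp
  also have "\<dots> = mat_trace (\<rho> * P) * mat_trace (P' * P')"
    unfolding mat_trace_mult[OF P'(1) P'(1)] by (simp add: sum_distrib_left)
  also have "\<dots> = of_nat d' * mat_trace (\<rho> * P)"
    using P'(2) by (simp add: mat_trace_def)
  finally have "Re (\<Sum>bs\<in>sign_patterns (length Us). bool_sign (bs ! p) * (\<Sum>a<d'. \<Sum>c<d'. ?\<tau> bs a c * P' $$ (c, a)))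
      = real d' * expect \<rho> P"
    unfolding expect_def by simp
  moreover have Re_sign: "Re (bool_sign b * z) = Re (bool_sign b) * Re z" for b z
    by (simp add: bool_sign_def)
  ultimately show ?thesis unfolding Re_sum Re_sign by simp
qed

section \<open>Independence of the realization\<close>

lemma psd_forms_as_mixture:
  fixes f :: "'b \<Rightarrow> nat \<Rightarrow> nat \<Rightarrow> complex" and X :: "'i \<Rightarrow> complex mat"
  assumes B: "finite B" and D: "D > 0"
    and f: "\<And>b. b \<in> B \<Longrightarrow> psd_form m (f b)"
    and f_herm: "\<And>b a c. b \<in> B \<Longrightarrow> a < m \<Longrightarrow> c < m \<Longrightarrow> f b a c = cnj (f b c a)"
    and trace: "(\<Sum>b\<in>B. Re (\<Sum>a<m. f b a a)) = D"
    and X: "\<And>i. hermitian_mat m (X i)" "\<And>i. X i * X i = 1\<^sub>m m"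
  obtains B' w \<sigma> where "finite B'" "sum w B' = 1" "\<And>b. b \<in> B' \<Longrightarrow> 0 \<le> w b \<and> density_matrix m (\<sigma> b)"
    "\<And>g i. (\<Sum>b\<in>B. g b * Re (\<Sum>a<m. \<Sum>c<m. f b a c * X i $$ (c, a))) / D
            = (\<Sum>b\<in>B'. w b * (g b * expect (\<sigma> b) (X i)))"
proof -
  define p where "p b = Re (\<Sum>a<m. f b a a)" for b
  define t where "t b i = Re (\<Sum>a<m. \<Sum>c<m. f b a c * X i $$ (c, a))" for b i
  define B' where "B' = {b \<in> B. p b > 0}"
  define \<sigma> where "\<sigma> b = mat m m (\<lambda>(a, c). f b a c / complex_of_real (p b))" for b
  have B': "finite B'" "B' \<subseteq> B" using B by (auto simp: B'_def)
  have t_le: "\<bar>t b i\<bar> \<le> p b" if "b \<in> B" for b i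
    unfolding t_def p_def by (rule psd_form_trace_involution_bound[OF f[OF that] X])
  have pt0: "p b = 0" "t b i = 0" if "b \<in> B - B'" for b i
    using t_le[of b i] that by (auto simp: B'_def)
  have "sum p B' = sum p B"
    using pt0(1) by (intro sum.mono_neutral_left B B') auto
  then have "sum (\<lambda>b. p b / D) B' = 1"
    using trace D unfolding p_def by (simp add: sum_divide_distrib[symmetric])
  moreover have "0 \<le> p b / D \<and> density_matrix m (\<sigma> b)" if "b \<in> B'" for b
  proof -
    have b: "b \<in> B" and "p b > 0" using that by (auto simp: B'_def)
    then have "density_matrix m (\<sigma> b)"
      unfolding \<sigma>_def by (intro density_matrix_normalize[OF f[OF b] f_herm[OF b] p_def])
    then show ?thesis using \<open>p b > 0\<close> D by simp
  qed
  moreover have "(\<Sum>b\<in>B. g b * t b i) / D = (\<Sum>b\<in>B'. p b / D * (g b * expect (\<sigma> b) (X i)))" for g i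
  proof -
    have "(\<Sum>b\<in>B. g b * t b i) = (\<Sum>b\<in>B'. g b * t b i)"
      using pt0 by (intro sum.mono_neutral_right B B') auto
    also have "\<dots> / D = (\<Sum>b\<in>B'. p b / D * (g b * expect (\<sigma> b) (X i)))"
      unfolding sum_divide_distrib \<sigma>_def expect_normalize[OF hermitian_matD(1)[OF X(1)]] t_def[symmetric]
      by (intro sum.cong refl) (auto simp: B'_def)
    finally show ?thesis .
  qed
  ultimately show ?thesis using B'(1) that unfolding t_def by blast
qed

text \<open>Jensen's inequality for the square, applied to the mixture.\<close>
lemma square_le_mixture_of_psd_forms:
  fixes f :: "'b \<Rightarrow> nat \<Rightarrow> nat \<Rightarrow> complex" and X :: "'i \<Rightarrow> complex mat" and \<epsilon> :: "'b \<Rightarrow> 'i \<Rightarrow> real"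
  assumes B: "finite B" and D: "D > 0"
    and f: "\<And>b. b \<in> B \<Longrightarrow> psd_form m (f b)"
    and f_herm: "\<And>b a c. b \<in> B \<Longrightarrow> a < m \<Longrightarrow> c < m \<Longrightarrow> f b a c = cnj (f b c a)"
    and trace: "(\<Sum>b\<in>B. Re (\<Sum>a<m. f b a a)) = D"
    and X: "\<And>i. hermitian_mat m (X i)" "\<And>i. X i * X i = 1\<^sub>m m"
    and sign: "\<And>b i. \<bar>\<epsilon> b i\<bar> = 1"
  shows "\<exists>(B' :: 'b set) w \<sigma>. finite B' \<and> sum w B' = 1 \<and> (\<forall>b\<in>B'. 0 \<le> w b \<and> density_matrix m (\<sigma> b)) \<and>
     (\<forall>i. ((\<Sum>b\<in>B. \<epsilon> b i * Re (\<Sum>a<m. \<Sum>c<m. f b a c * X i $$ (c, a))) / D)\<^sup>2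
            \<le> (\<Sum>b\<in>B'. w b * (expect (\<sigma> b) (X i))\<^sup>2))"
proof (rule psd_forms_as_mixture[where f = f and X = X, OF B D f f_herm trace X])
  fix B' w \<sigma>
  assume B': "finite B'" "sum w B' = 1" "\<And>b. b \<in> B' \<Longrightarrow> 0 \<le> w b \<and> density_matrix m (\<sigma> b)"
    and mean: "\<And>g i. (\<Sum>b\<in>B. g b * Re (\<Sum>a<m. \<Sum>c<m. f b a c * X i $$ (c, a))) / D
                       = (\<Sum>b\<in>B'. w b * (g b * expect (\<sigma> b) (X i)))"
  have "B' \<noteq> {}" using B'(2) by auto
  have "(\<epsilon> b i)\<^sup>2 = 1" for b i using sign[of b i] abs_square_eq_1 by blast
  then have "((\<Sum>b\<in>B. \<epsilon> b i * Re (\<Sum>a<m. \<Sum>c<m. f b a c * X i $$ (c, a))) / D)\<^sup>2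
      \<le> (\<Sum>b\<in>B'. w b * (expect (\<sigma> b) (X i))\<^sup>2)" for i
    using convex_on_sum[OF B'(1) \<open>B' \<noteq> {}\<close> convex_power2 B'(2), of "\<lambda>b. \<epsilon> b i * expect (\<sigma> b) (X i)"] B'(3)
    unfolding mean by (simp add: power_mult_distrib)
  then show ?thesis
    using B' by (intro exI[where x = B'] exI[where x = w] exI[where x = \<sigma>] conjI ballI allI) simp_all
qed

lemma finite_family_as_list:
  fixes U :: "'i::finite \<Rightarrow> 'a"
  obtains Us pos where "set Us = range U" "\<And>i. pos i < length Us" "\<And>i. Us ! pos i = U i"
proof -
  obtain vs :: "'i list" where vs: "set vs = UNIV" using finite_list[of "UNIV :: 'i set"] by auto
  have "\<exists>q. q < length (map U vs) \<and> map U vs ! q = U i" for i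
  proof -
    obtain q where "q < length vs" "vs ! q = i" using vs in_set_conv_nth[of i vs] by auto
    then show ?thesis by auto
  qed
  then have "\<forall>i. \<exists>q. q < length (map U vs) \<and> map U vs ! q = U i" by blast
  then obtain pos where "\<forall>i. pos i < length (map U vs) \<and> map U vs ! pos i = U i"
    by (rule choice[THEN exE])
  moreover have "set (map U vs) = range U" using vs by simp
  ultimately show ?thesis using that by blast
qed

text \<open>The key step: the observables \<open>conj P\<^sub>i \<otimes> P'\<^sub>i\<close> commute, and their joint eigenprojections
  split the state \<open>\<rho>\<close> into a mixture of states \<open>\<sigma>\<^sub>b\<close> on the second factor in which
  \<open>\<langle>P\<^sub>i\<rangle>\<^sub>\<rho>\<close> is the average of \<open>\<plusminus>\<langle>P'\<^sub>i\<rangle>\<^sub>\<sigma>\<^sub>b\<close>.\<close>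
lemma expect_square_le_mixture:
  fixes P P' :: "'i::finite \<Rightarrow> complex mat"
  assumes \<rho>: "density_matrix d \<rho>" and "d' > 0"
    and P: "\<And>i. hermitian_mat d (P i)" "\<And>i. P i * P i = 1\<^sub>m d"
    and P': "\<And>i. hermitian_mat d' (P' i)" "\<And>i. P' i * P' i = 1\<^sub>m d'"
    and commute: "\<And>i j. kron (conj_mat (P i)) (P' i) * kron (conj_mat (P j)) (P' j) =
                        kron (conj_mat (P j)) (P' j) * kron (conj_mat (P i)) (P' i)"
  shows "\<exists>(B :: bool list set) w \<sigma>. finite B \<and> sum w B = 1 \<and> (\<forall>b\<in>B. 0 \<le> w b \<and> density_matrix d' (\<sigma> b)) \<and>
           (\<forall>i. (expect \<rho> (P i))\<^sup>2 \<le> (\<Sum>b\<in>B. w b * (expect (\<sigma> b) (P' i))\<^sup>2))"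
proof -
  define U where "U i = kron (conj_mat (P i)) (P' i)" for i
  obtain Us pos where Us_set: "set Us = range U" and pos: "\<And>i. pos i < length Us" "\<And>i. Us ! pos i = U i"
    using finite_family_as_list by blast
  define N where "N = d * d'"
  have "hermitian_mat N (U i) \<and> U i * U i = 1\<^sub>m N" for i
    unfolding U_def N_def using hermitian_mat_kron_conj[OF P(1) P'(1)]
      kron_conj_involution[OF hermitian_matD(1)[OF P(1)] hermitian_matD(1)[OF P'(1)] P(2) P'(2)] by simp
  then have Us: "\<forall>V\<in>set Us. hermitian_mat N V \<and> V * V = 1\<^sub>m N" "\<forall>V\<in>set Us. \<forall>W\<in>set Us. V * W = W * V"
    using commute unfolding Us_set U_def by auto
  then have Us_carrier: "set Us \<subseteq> carrier_mat N N" using hermitian_matD(1) by blast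
  define \<tau> where "\<tau> bs = partial_trace_with d d' \<rho> (joint_eigenproj N Us bs)" for bs
  define \<epsilon> where "\<epsilon> bs i = Re (bool_sign (bs ! pos i))" for bs i
  have proj: "hermitian_mat (d * d') (joint_eigenproj N Us bs)"
    "joint_eigenproj N Us bs * joint_eigenproj N Us bs = joint_eigenproj N Us bs" for bs
    using joint_eigenproj_hermitian_idem[OF Us] unfolding N_def by auto
  have trace: "(\<Sum>bs\<in>sign_patterns (length Us). Re (\<Sum>a<d'. \<tau> bs a a)) = real d'"
    using arg_cong[OF sum_partial_trace_joint_eigenproj_trace[OF \<rho> Us_carrier[unfolded N_def]], of Re]
    unfolding \<tau>_def N_def by (simp add: Re_sum)
  have mean: "expect \<rho> (P i) =
      (\<Sum>bs\<in>sign_patterns (length Us). \<epsilon> bs i * Re (\<Sum>a<d'. \<Sum>c<d'. \<tau> bs a c * P' i $$ (c, a))) / real d'"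
    for i
    using sum_partial_trace_joint_eigenproj_signed[OF \<rho> Us_carrier[unfolded N_def] pos(1) _ P(1)
        hermitian_matD(1)[OF P'(1)] P'(2)] pos(2)[of i] \<open>d' > 0\<close>
    unfolding \<tau>_def \<epsilon>_def N_def U_def by simp
  have "\<exists>(B :: bool list set) w \<sigma>. finite B \<and> sum w B = 1 \<and> (\<forall>b\<in>B. 0 \<le> w b \<and> density_matrix d' (\<sigma> b)) \<and>
     (\<forall>i. ((\<Sum>bs\<in>sign_patterns (length Us). \<epsilon> bs i * Re (\<Sum>a<d'. \<Sum>c<d'. \<tau> bs a c * P' i $$ (c, a))) / real d')\<^sup>2
            \<le> (\<Sum>b\<in>B. w b * (expect (\<sigma> b) (P' i))\<^sup>2))"
  proof (rule square_le_mixture_of_psd_forms[where f = \<tau> and X = P'])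
    show "psd_form d' (\<tau> bs)" for bs unfolding \<tau>_def by (rule partial_trace_with_psd[OF \<rho> proj])
    show "\<tau> bs a c = cnj (\<tau> bs c a)" if "a < d'" "c < d'" for bs a c
      unfolding \<tau>_def by (rule partial_trace_with_hermitian[OF \<rho> proj(1) that])
    show "\<bar>\<epsilon> bs i\<bar> = 1" for bs i by (simp add: \<epsilon>_def bool_sign_def)
  qed (use trace P' \<open>d' > 0\<close> in simp_all)
  then show ?thesis unfolding mean[symmetric] .
qed

lemma down_closure_subset_convex_hull:
  fixes T T' :: "(real ^ 'n) set"
  assumes "\<And>y. y \<in> T \<Longrightarrow> \<exists>(B :: 'b set) w z. finite B \<and> sum w B = 1 \<and> (\<forall>b\<in>B. 0 \<le> w b \<and> z b \<in> T') \<and>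
                                        (\<forall>i. y $ i \<le> (\<Sum>b\<in>B. w b * z b $ i))"
  shows "down_closure T \<subseteq> convex hull (down_closure T')"
proof
  fix x assume "x \<in> down_closure T"
  then obtain y where y: "y \<in> T" and xy: "\<And>i. x $ i \<le> y $ i" unfolding down_closure_def by blast
  obtain B :: "'b set" and w z where B: "finite B" "sum w B = 1" "\<And>b. b \<in> B \<Longrightarrow> 0 \<le> w b \<and> z b \<in> T'"
    and yz: "\<And>i. y $ i \<le> (\<Sum>b\<in>B. w b * z b $ i)"
    using assms[OF y] by blast
  txt \<open>Lower every \<open>z b\<close> by the same nonnegative defect \<open>\<delta>\<close>.\<close>
  define \<delta> where "\<delta> = (\<Sum>b\<in>B. w b *\<^sub>R z b) - x"
  have \<delta>: "0 \<le> \<delta> $ i" for i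
    using xy[of i] yz[of i] unfolding \<delta>_def by (simp add: sum_component)
  have x: "x = (\<Sum>b\<in>B. w b *\<^sub>R (z b - \<delta>))"
    using B(2) by (simp add: \<delta>_def scaleR_diff_right sum_subtractf scaleR_sum_left[symmetric])
  have "z b - \<delta> \<in> down_closure T'" if "b \<in> B" for b
    unfolding down_closure_def using B(3)[OF that] \<delta> by force
  then show "x \<in> convex hull (down_closure T')"
    unfolding x using B(3) by (intro convex_sum[OF B(1) convex_convex_hull B(2)]) (auto intro: hull_inc)
qed

lemma realizationD:
  assumes "realization G S"
  obtains l where "\<And>i. length (S i) = l"
    and "\<And>i j. G i j \<Longrightarrow> pauli_string_mat (S i) * pauli_string_mat (S j) = - (pauli_string_mat (S j) * pauli_string_mat (S i))"
    and "\<And>i j. \<not> G i j \<Longrightarrow> pauli_string_mat (S i) * pauli_string_mat (S j) = pauli_string_mat (S j) * pauli_string_mat (S i)"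
  using assms unfolding realization_def by metis

lemma Qset_le_mixture:
  assumes S: "realization G S" and S': "realization G S'" and y: "y \<in> Qset S"
  shows "\<exists>(B :: bool list set) w z. finite B \<and> sum w B = 1 \<and> (\<forall>b\<in>B. 0 \<le> w b \<and> z b \<in> Qset S') \<and>
           (\<forall>i. y $ i \<le> (\<Sum>b\<in>B. w b * z b $ i))"
proof -
  obtain l where l: "\<And>i. length (S i) = l"
    and anti: "\<And>i j. G i j \<Longrightarrow> pauli_string_mat (S i) * pauli_string_mat (S j) = - (pauli_string_mat (S j) * pauli_string_mat (S i))"
    and comm: "\<And>i j. \<not> G i j \<Longrightarrow> pauli_string_mat (S i) * pauli_string_mat (S j) = pauli_string_mat (S j) * pauli_string_mat (S i)"
    using realizationD[OF S] by metis
  obtain l' where l': "\<And>i. length (S' i) = l'"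
    and anti': "\<And>i j. G i j \<Longrightarrow> pauli_string_mat (S' i) * pauli_string_mat (S' j) = - (pauli_string_mat (S' j) * pauli_string_mat (S' i))"
    and comm': "\<And>i j. \<not> G i j \<Longrightarrow> pauli_string_mat (S' i) * pauli_string_mat (S' j) = pauli_string_mat (S' j) * pauli_string_mat (S' i)"
    using realizationD[OF S'] by metis
  let ?P = "\<lambda>i. pauli_string_mat (S i)" and ?P' = "\<lambda>i. pauli_string_mat (S' i)"
  obtain \<rho> where \<rho>: "density_matrix (2 ^ l) \<rho>" and y: "\<And>i. y $ i = (expect \<rho> (?P i))\<^sup>2"
    using y l unfolding Qset_def by auto
  have "\<exists>(B :: bool list set) w \<sigma>. finite B \<and> sum w B = 1 \<and> (\<forall>b\<in>B. 0 \<le> w b \<and> density_matrix (2 ^ l') (\<sigma> b)) \<and>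
           (\<forall>i. (expect \<rho> (?P i))\<^sup>2 \<le> (\<Sum>b\<in>B. w b * (expect (\<sigma> b) (?P' i))\<^sup>2))"
  proof (rule expect_square_le_mixture[OF \<rho>])
    fix i j
    show "hermitian_mat (2 ^ l) (?P i)" "?P i * ?P i = 1\<^sub>m (2 ^ l)"
      using pauli_string_mat_hermitian[of "S i"] pauli_string_mat_square[of "S i"] l by simp_all
    show "hermitian_mat (2 ^ l') (?P' i)" "?P' i * ?P' i = 1\<^sub>m (2 ^ l')"
      using pauli_string_mat_hermitian[of "S' i"] pauli_string_mat_square[of "S' i"] l' by simp_all
    have "?P k \<in> carrier_mat (2 ^ l) (2 ^ l)" "?P' k \<in> carrier_mat (2 ^ l') (2 ^ l')" for k
      using pauli_string_mat_carrier[of "S k"] pauli_string_mat_carrier[of "S' k"] l l' by simp_all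
    then show "kron (conj_mat (?P i)) (?P' i) * kron (conj_mat (?P j)) (?P' j) =
          kron (conj_mat (?P j)) (?P' j) * kron (conj_mat (?P i)) (?P' i)"
      using anti[of i j] anti'[of i j] comm[of i j] comm'[of i j] by (intro kron_conj_commute) auto
  qed simp
  then obtain B :: "bool list set" and w \<sigma> where B: "finite B" "sum w B = 1" "\<forall>b\<in>B. 0 \<le> w b \<and> density_matrix (2 ^ l') (\<sigma> b)"
    and le: "\<And>i. (expect \<rho> (?P i))\<^sup>2 \<le> (\<Sum>b\<in>B. w b * (expect (\<sigma> b) (?P' i))\<^sup>2)"
    by blast
  define z where "z b = (\<chi> i. (expect (\<sigma> b) (?P' i))\<^sup>2)" for b
  have "z b \<in> Qset S'" if "b \<in> B" for b
    using B(3) that l' unfolding Qset_def z_def by auto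
  moreover have "y $ i \<le> (\<Sum>b\<in>B. w b * z b $ i)" for i
    using le[of i] unfolding y z_def by simp
  ultimately show ?thesis using B by blast
qed

lemma BETA_of_eq:
  assumes "realization G S" "realization G S'"
  shows "BETA_of S = BETA_of S'"
proof -
  have "convex hull (down_closure (Qset S)) = convex hull (down_closure (Qset S'))"
    using down_closure_subset_convex_hull[OF Qset_le_mixture[OF assms]]
      down_closure_subset_convex_hull[OF Qset_le_mixture[OF assms(2,1)]]
    by (metis convex_convex_hull hull_minimal subset_antisym)
  then show ?thesis unfolding BETA_of_def by simp
qed

section \<open>Attainment of the weighted beta number\<close>

lemma sum_lessThan_single:
  fixes a d :: nat
  assumes "a < d" "\<And>i. i < d \<Longrightarrow> i \<noteq> a \<Longrightarrow> g i = 0"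
  shows "(\<Sum>i<d. g i) = (g a :: complex)"
proof -
  have "(\<Sum>i<d. g i) = (\<Sum>i\<in>{a}. g i)" by (rule sum.mono_neutral_right) (use assms in auto)
  then show ?thesis by simp
qed

lemma sum_lessThan_pair:
  fixes a b d :: nat
  assumes "a < d" "b < d" "a \<noteq> b" "\<And>i. i < d \<Longrightarrow> i \<noteq> a \<Longrightarrow> i \<noteq> b \<Longrightarrow> g i = 0"
  shows "(\<Sum>i<d. g i) = g a + (g b :: complex)"
proof -
  have "(\<Sum>i<d. g i) = (\<Sum>i\<in>{a, b}. g i)" by (rule sum.mono_neutral_right) (use assms in auto)
  then show ?thesis using assms(3) by simp
qed

lemma density_matrix_diag_nonneg:
  assumes \<rho>: "density_matrix d \<rho>" and a: "a < d"
  shows "Im (\<rho> $$ (a, a)) = 0" "0 \<le> Re (\<rho> $$ (a, a))"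
proof -
  define v where "v i = (if i = a then 1 else (0::complex))" for i
  have "(\<Sum>i<d. \<Sum>j<d. cnj (v i) * \<rho> $$ (i, j) * v j) = (\<Sum>j<d. cnj (v a) * \<rho> $$ (a, j) * v j)"
    by (rule sum_lessThan_single[OF a]) (simp add: v_def)
  also have "\<dots> = \<rho> $$ (a, a)"
    by (subst sum_lessThan_single[OF a]) (simp_all add: v_def)
  finally have "(\<Sum>i<d. \<Sum>j<d. cnj (v i) * \<rho> $$ (i, j) * v j) = \<rho> $$ (a, a)" .
  moreover note density_matrix_psd_form[OF \<rho>, unfolded psd_form_def, rule_format, of v]
  ultimately show "Im (\<rho> $$ (a, a)) = 0" "0 \<le> Re (\<rho> $$ (a, a))" by simp_all
qed

lemma density_matrix_diag_le_1:
  assumes \<rho>: "density_matrix d \<rho>" and a: "a < d"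
  shows "Re (\<rho> $$ (a, a)) \<le> 1"
proof -
  have "(\<Sum>i<d. Re (\<rho> $$ (i, i))) = 1"
    using density_matrixD(3)[OF \<rho>] by (metis Re_sum one_complex.sel(1))
  moreover have "Re (\<rho> $$ (a, a)) \<le> (\<Sum>i<d. Re (\<rho> $$ (i, i)))"
    by (rule member_le_sum) (use a density_matrix_diag_nonneg(2)[OF \<rho>] in auto)
  ultimately show ?thesis by simp
qed

lemma density_matrix_offdiag_bound:
  assumes \<rho>: "density_matrix d \<rho>" and a: "a < d" and b: "b < d" and ab: "a \<noteq> b"
  shows "2 * cmod (\<rho> $$ (a, b)) \<le> Re (\<rho> $$ (a, a)) + Re (\<rho> $$ (b, b))"
proof (cases "\<rho> $$ (a, b) = 0")
  case True
  then show ?thesis using density_matrix_diag_nonneg(2)[OF \<rho>] a b by (simp add: add_nonneg_nonneg)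
next
  case False
  define z where "z = \<rho> $$ (a, b)"
  txt \<open>Test the form against \<open>e\<^sub>a + u e\<^sub>b\<close> with the phase \<open>u\<close> chosen so that \<open>u z = - |z|\<close>.\<close>
  define u where "u = - cnj z / complex_of_real (cmod z)"
  have n0: "cmod z > 0" using False by (simp add: z_def)
  have zz: "z * cnj z = complex_of_real ((cmod z)\<^sup>2)" using complex_norm_square[of z] by simp
  have uz: "u * z = - complex_of_real (cmod z)"
    unfolding u_def using zz n0 by (simp add: field_simps power2_eq_square mult.commute)
  have uu: "cnj u * u = 1"
    unfolding u_def using zz n0 by (simp add: field_simps power2_eq_square mult.commute)
  define v where "v i = (if i = a then 1 else if i = b then u else 0)" for i
  have "(\<Sum>i<d. \<Sum>j<d. cnj (v i) * \<rho> $$ (i, j) * v j)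
      = (\<Sum>j<d. cnj (v a) * \<rho> $$ (a, j) * v j) + (\<Sum>j<d. cnj (v b) * \<rho> $$ (b, j) * v j)"
    by (rule sum_lessThan_pair[OF a b ab]) (simp add: v_def)
  also have "\<dots> = (cnj (v a) * \<rho> $$ (a, a) * v a + cnj (v a) * \<rho> $$ (a, b) * v b)
                + (cnj (v b) * \<rho> $$ (b, a) * v a + cnj (v b) * \<rho> $$ (b, b) * v b)"
    by (intro arg_cong2[where f = "(+)"] sum_lessThan_pair[OF a b ab]) (simp_all add: v_def)
  also have "\<dots> = \<rho> $$ (a, a) + \<rho> $$ (b, b) + (u * z + cnj (u * z))"
    using ab uu density_matrixD(2)[OF \<rho> b a] unfolding v_def z_def by (simp add: algebra_simps)
  also have "\<dots> = \<rho> $$ (a, a) + \<rho> $$ (b, b) - 2 * complex_of_real (cmod z)"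
    using uz by simp
  finally have "0 \<le> Re (\<rho> $$ (a, a) + \<rho> $$ (b, b) - 2 * complex_of_real (cmod z))"
    using density_matrix_psd_form[OF \<rho>, unfolded psd_form_def, rule_format, of v] by metis
  then show ?thesis by (simp add: z_def)
qed

lemma density_matrix_entry_bound:
  assumes \<rho>: "density_matrix d \<rho>" and "a < d" "b < d"
  shows "cmod (\<rho> $$ (a, b)) \<le> 1"
proof (cases "a = b")
  case True
  then show ?thesis
    using density_matrix_diag_nonneg[OF \<rho> \<open>a < d\<close>] density_matrix_diag_le_1[OF \<rho> \<open>a < d\<close>]
    by (simp add: cmod_eq_Re)
next
  case False
  then show ?thesis
    using density_matrix_offdiag_bound[OF assms False]
      density_matrix_diag_le_1[OF \<rho> assms(2)] density_matrix_diag_le_1[OF \<rho> assms(3)] by linarith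
qed

lemma density_matrix_limit:
  assumes R: "\<And>k. density_matrix d (R k)"
    and lim: "\<And>a b. a < d \<Longrightarrow> b < d \<Longrightarrow> (\<lambda>k. R k $$ (a, b)) \<longlonglongrightarrow> L $$ (a, b)"
    and L: "L \<in> carrier_mat d d"
  shows "density_matrix d L"
  unfolding density_matrix_def Let_def
proof (intro conjI allI impI)
  show "L \<in> carrier_mat d d" by (rule L)
  fix i j assume i: "i < d" and j: "j < d"
  have "(\<lambda>k. R k $$ (i, j)) = (\<lambda>k. cnj (R k $$ (j, i)))" using density_matrixD(2)[OF R i j] by simp
  then have "(\<lambda>k. R k $$ (i, j)) \<longlonglongrightarrow> cnj (L $$ (j, i))" using tendsto_cnj[OF lim[OF j i]] by simp
  then show "L $$ (i, j) = cnj (L $$ (j, i))" using lim[OF i j] LIMSEQ_unique by blast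
next
  fix v :: "nat \<Rightarrow> complex"
  define q where "q k = (\<Sum>i<d. \<Sum>j<d. cnj (v i) * R k $$ (i, j) * v j)" for k
  have q: "q \<longlonglongrightarrow> (\<Sum>i<d. \<Sum>j<d. cnj (v i) * L $$ (i, j) * v j)"
    unfolding q_def by (intro tendsto_sum tendsto_mult tendsto_const lim) auto
  have "Im (q k) = 0" "Re (q k) \<ge> 0" for k
    using density_matrix_psd_form[OF R] unfolding psd_form_def q_def by blast+
  moreover note tendsto_Im[OF q] tendsto_Re[OF q]
  ultimately show "Im (\<Sum>i<d. \<Sum>j<d. cnj (v i) * L $$ (i, j) * v j) = 0"
    "0 \<le> Re (\<Sum>i<d. \<Sum>j<d. cnj (v i) * L $$ (i, j) * v j)"
    by (simp_all add: LIMSEQ_const_iff LIMSEQ_le_const)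
next
  have "(\<lambda>k. \<Sum>a<d. R k $$ (a, a)) \<longlonglongrightarrow> (\<Sum>a<d. L $$ (a, a))"
    by (intro tendsto_sum lim) auto
  then have "(\<Sum>a<d. L $$ (a, a)) = 1"
    using density_matrixD(3)[OF R] LIMSEQ_unique[OF _ tendsto_const] by simp
  then show "mat_trace L = 1" using L by (simp add: mat_trace_def)
qed

lemma expect_limit:
  assumes R: "\<And>k. R k \<in> carrier_mat d d" and L: "L \<in> carrier_mat d d" and P: "P \<in> carrier_mat d d"
    and lim: "\<And>a b. a < d \<Longrightarrow> b < d \<Longrightarrow> (\<lambda>k. R k $$ (a, b)) \<longlonglongrightarrow> L $$ (a, b)"
  shows "(\<lambda>k. expect (R k) P) \<longlonglongrightarrow> expect L P"
  unfolding expect_def mat_trace_mult[OF R P] mat_trace_mult[OF L P]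
  by (intro tendsto_Re tendsto_sum tendsto_mult tendsto_const lim) auto

lemma density_matrix_exists:
  assumes "d > 0"
  shows "density_matrix d (mat d d (\<lambda>(i, j). if i = 0 \<and> j = 0 then 1 else 0))"
  unfolding density_matrix_def Let_def
proof (intro conjI allI impI)
  let ?M = "mat d d (\<lambda>(i, j). if i = 0 \<and> j = 0 then 1 else (0::complex))"
  show "?M \<in> carrier_mat d d" "\<And>i j. i < d \<Longrightarrow> j < d \<Longrightarrow> ?M $$ (i, j) = cnj (?M $$ (j, i))" by auto
  fix v :: "nat \<Rightarrow> complex"
  have "(\<Sum>i<d. \<Sum>j<d. cnj (v i) * ?M $$ (i, j) * v j) = cnj (v 0) * v 0"
    by (subst sum_lessThan_single[OF assms], simp, subst sum_lessThan_single[OF assms]) (use assms in simp_all)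
  also have "\<dots> = complex_of_real ((cmod (v 0))\<^sup>2)"
    using complex_norm_square[of "v 0"] by (simp add: mult.commute)
  finally show "Im (\<Sum>i<d. \<Sum>j<d. cnj (v i) * ?M $$ (i, j) * v j) = 0"
    "0 \<le> Re (\<Sum>i<d. \<Sum>j<d. cnj (v i) * ?M $$ (i, j) * v j)" by simp_all
next
  let ?M = "mat d d (\<lambda>(i, j). if i = 0 \<and> j = 0 then 1 else (0::complex))"
  have "mat_trace ?M = (\<Sum>i<d. ?M $$ (i, i))" by (simp add: mat_trace_def)
  also have "\<dots> = 1" by (subst sum_lessThan_single[OF assms]) (use assms in simp_all)
  finally show "mat_trace ?M = 1" .
qed

lemma bounded_family_subseq_convergent:
  fixes f :: "nat \<Rightarrow> 'i \<Rightarrow> complex"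
  assumes "finite I" "\<And>k p. p \<in> I \<Longrightarrow> cmod (f k p) \<le> B"
  shows "\<exists>r. strict_mono r \<and> (\<forall>p\<in>I. convergent (\<lambda>k. f (r k) p))"
  using assms
proof (induction I rule: finite_induct)
  case empty
  have "strict_mono (id :: nat \<Rightarrow> nat)" by (simp add: strict_mono_def)
  then show ?case by blast
next
  case (insert p I)
  obtain r1 where r1: "strict_mono r1" "\<forall>q\<in>I. convergent (\<lambda>k. f (r1 k) q)"
    using insert.IH insert.prems by blast
  have "\<forall>k. f (r1 k) p \<in> cball 0 B" using insert.prems by simp
  then obtain L r2 where r2: "strict_mono r2" "((\<lambda>k. f (r1 k) p) \<circ> r2) \<longlonglongrightarrow> L"
    using compact_imp_seq_compact[OF compact_cball] by (metis seq_compactE)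
  have "convergent (\<lambda>k. f ((r1 \<circ> r2) k) q)" if "q \<in> insert p I" for q
  proof (cases "q = p")
    case True
    then show ?thesis using r2(2) by (auto simp: convergent_def o_def)
  next
    case False
    then have "q \<in> I" using that by simp
    then obtain L' where "(\<lambda>k. f (r1 k) q) \<longlonglongrightarrow> L'" using r1(2) by (auto simp: convergent_def)
    then have "((\<lambda>k. f (r1 k) q) \<circ> r2) \<longlonglongrightarrow> L'" using r2(1) by (rule LIMSEQ_subseq_LIMSEQ)
    then show ?thesis by (auto simp: convergent_def o_def)
  qed
  then show ?case using strict_mono_o[OF r1(1) r2(1)] by blast
qed

lemma density_matrix_seq_compact:
  fixes R :: "nat \<Rightarrow> complex mat"
  assumes R: "\<And>k. density_matrix d (R k)"
  obtains r L where "strict_mono r" "density_matrix d L"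
    "\<And>a b. a < d \<Longrightarrow> b < d \<Longrightarrow> (\<lambda>k. R (r k) $$ (a, b)) \<longlonglongrightarrow> L $$ (a, b)"
proof -
  have "\<exists>r. strict_mono r \<and> (\<forall>p\<in>{..<d} \<times> {..<d}. convergent (\<lambda>k. R (r k) $$ p))"
    using bounded_family_subseq_convergent[of "{..<d} \<times> {..<d}" "\<lambda>k p. R k $$ p" 1]
      density_matrix_entry_bound[OF R] by auto
  then obtain r where r: "strict_mono r" and conv: "\<And>a b. a < d \<Longrightarrow> b < d \<Longrightarrow> convergent (\<lambda>k. R (r k) $$ (a, b))"
    by blast
  define L where "L = mat d d (\<lambda>(a, b). lim (\<lambda>k. R (r k) $$ (a, b)))"
  have lim: "(\<lambda>k. R (r k) $$ (a, b)) \<longlonglongrightarrow> L $$ (a, b)" if "a < d" "b < d" for a b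
    using conv[OF that] that by (simp add: L_def convergent_LIMSEQ_iff)
  have "density_matrix d L"
    by (rule density_matrix_limit[where R = "\<lambda>k. R (r k)", OF R lim]) (simp_all add: L_def)
  then show ?thesis using r lim that by blast
qed

lemma weighted_expect_square_le:
  fixes P :: "'i \<Rightarrow> complex mat" and w :: "'i \<Rightarrow> real"
  assumes \<rho>: "density_matrix d \<rho>" and P: "\<And>i. hermitian_mat d (P i)" "\<And>i. P i * P i = 1\<^sub>m d"
  shows "(\<Sum>i\<in>I. w i * (expect \<rho> (P i))\<^sup>2) \<le> (\<Sum>i\<in>I. \<bar>w i\<bar>)"
proof (rule sum_mono)
  fix i
  have "(expect \<rho> (P i))\<^sup>2 \<le> 1"
    using expect_involution_bound[OF \<rho> P] by (simp add: abs_square_le_1)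
  then have "\<bar>w i\<bar> * (expect \<rho> (P i))\<^sup>2 \<le> \<bar>w i\<bar>" by (simp add: mult_left_le)
  moreover have "w i * (expect \<rho> (P i))\<^sup>2 \<le> \<bar>w i\<bar> * (expect \<rho> (P i))\<^sup>2"
    by (simp add: mult_right_mono)
  ultimately show "w i * (expect \<rho> (P i))\<^sup>2 \<le> \<bar>w i\<bar>" by linarith
qed

lemma weighted_expect_square_max_attained:
  fixes P :: "'i::finite \<Rightarrow> complex mat" and w :: "'i \<Rightarrow> real"
  assumes "d > 0" and P: "\<And>i. hermitian_mat d (P i)" "\<And>i. P i * P i = 1\<^sub>m d"
  shows "\<exists>\<rho>\<^sub>0. density_matrix d \<rho>\<^sub>0 \<and> (\<forall>\<rho>. density_matrix d \<rho> \<longrightarrow>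
           (\<Sum>i\<in>UNIV. w i * (expect \<rho> (P i))\<^sup>2) \<le> (\<Sum>i\<in>UNIV. w i * (expect \<rho>\<^sub>0 (P i))\<^sup>2))"
proof -
  define f where "f \<rho> = (\<Sum>i\<in>UNIV. w i * (expect \<rho> (P i))\<^sup>2)" for \<rho>
  define F where "F = f ` {\<rho>. density_matrix d \<rho>}"
  have "f \<rho> \<le> (\<Sum>i\<in>UNIV. \<bar>w i\<bar>)" if "density_matrix d \<rho>" for \<rho>
    unfolding f_def by (rule weighted_expect_square_le[OF that P])
  then have F: "bdd_above F" "F \<noteq> {}"
    unfolding F_def using density_matrix_exists[OF \<open>d > 0\<close>] by (auto intro!: bdd_aboveI)
  define M where "M = Sup F"
  have "\<forall>k. \<exists>\<rho>. density_matrix d \<rho> \<and> M + - inverse (real (Suc k)) < f \<rho>"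
  proof
    fix k
    have "M + - inverse (real (Suc k)) < Sup F" unfolding M_def by simp
    then obtain y where "y \<in> F" "M + - inverse (real (Suc k)) < y"
      using less_cSup_iff[OF F(2,1)] by blast
    then show "\<exists>\<rho>. density_matrix d \<rho> \<and> M + - inverse (real (Suc k)) < f \<rho>"
      unfolding F_def by blast
  qed
  then obtain R where "\<forall>k. density_matrix d (R k) \<and> M + - inverse (real (Suc k)) < f (R k)"
    by (rule choice[THEN exE])
  then have R: "\<And>k. density_matrix d (R k)" and RM: "\<And>k. M + - inverse (real (Suc k)) < f (R k)"
    by auto
  obtain r L where r: "strict_mono r" and L: "density_matrix d L"
    and lim: "\<And>a b. a < d \<Longrightarrow> b < d \<Longrightarrow> (\<lambda>k. R (r k) $$ (a, b)) \<longlonglongrightarrow> L $$ (a, b)"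
    using density_matrix_seq_compact[where R = R, OF R] by blast
  have "(\<lambda>k. f (R (r k))) \<longlonglongrightarrow> f L"
    unfolding f_def using density_matrixD(1)[OF R] density_matrixD(1)[OF L] hermitian_matD(1)[OF P(1)]
    by (intro tendsto_sum tendsto_mult tendsto_const tendsto_power expect_limit lim)
  moreover have "M + - inverse (real (Suc k)) \<le> f (R (r k))" for k
  proof -
    have "inverse (real (Suc (r k))) \<le> inverse (real (Suc k))"
      using seq_suble[OF r, of k] by (simp add: le_imp_inverse_le)
    then show ?thesis using RM[of "r k"] by linarith
  qed
  ultimately have "M \<le> f L"
    by (intro LIMSEQ_le[OF LIMSEQ_inverse_real_of_nat_add_minus]) auto
  moreover have "f \<rho> \<le> M" if "density_matrix d \<rho>" for \<rho>
    unfolding M_def using that F(1) by (intro cSup_upper) (auto simp: F_def)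
  ultimately have "f \<rho> \<le> f L" if "density_matrix d \<rho>" for \<rho>
    using that by (meson order_trans)
  then show ?thesis using L unfolding f_def by blast
qed

lemma BETA_of_linear_max:
  assumes S: "realization G S" and w: "w \<in> nonneg_orthant"
  shows "\<exists>v\<in>BETA_of S.
           Sup {\<Sum>i\<in>UNIV. w $ i * (expect \<rho> (pauli_string_mat (S i)))\<^sup>2 | \<rho>.
                \<forall>i. density_matrix (2 ^ length (S i)) \<rho>} = (\<Sum>i\<in>UNIV. w $ i * v $ i)
           \<and> (\<forall>u\<in>BETA_of S. (\<Sum>i\<in>UNIV. w $ i * u $ i) \<le> (\<Sum>i\<in>UNIV. w $ i * v $ i))"
proof -
  obtain l where l: "\<And>i. length (S i) = l" using realizationD[OF S] by metis
  let ?P = "\<lambda>i. pauli_string_mat (S i)"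
  let ?f = "\<lambda>\<rho>. \<Sum>i\<in>UNIV. w $ i * (expect \<rho> (?P i))\<^sup>2"
  obtain \<rho>\<^sub>0 where \<rho>\<^sub>0: "density_matrix (2 ^ l) \<rho>\<^sub>0"
    and max: "\<And>\<rho>. density_matrix (2 ^ l) \<rho> \<Longrightarrow> ?f \<rho> \<le> ?f \<rho>\<^sub>0"
    using weighted_expect_square_max_attained[of "2 ^ l" ?P "\<lambda>i. w $ i"]
      pauli_string_mat_hermitian pauli_string_mat_square l by force
  define v where "v = (\<chi> i. (expect \<rho>\<^sub>0 (?P i))\<^sup>2)"
  have wv: "(\<Sum>i\<in>UNIV. w $ i * v $ i) = ?f \<rho>\<^sub>0" by (simp add: v_def)
  have "v \<in> Qset S" using \<rho>\<^sub>0 l by (auto simp: Qset_def v_def)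
  then have v: "v \<in> BETA_of S"
    unfolding BETA_of_def nonneg_orthant_def down_closure_def by (auto intro!: hull_inc simp: v_def)
  have "Sup {?f \<rho> | \<rho>. \<forall>i. density_matrix (2 ^ length (S i)) \<rho>} = (\<Sum>i\<in>UNIV. w $ i * v $ i)"
    unfolding wv using \<rho>\<^sub>0 max l by (intro cSup_eq_maximum) auto
  moreover have "(\<Sum>i\<in>UNIV. w $ i * u $ i) \<le> (\<Sum>i\<in>UNIV. w $ i * v $ i)" if "u \<in> BETA_of S" for u
  proof -
    have "down_closure (Qset S) \<subseteq> {u. w \<bullet> u \<le> ?f \<rho>\<^sub>0}"
    proof
      fix x assume "x \<in> down_closure (Qset S)"
      then obtain \<rho> where \<rho>: "density_matrix (2 ^ l) \<rho>" and x: "\<And>i. x $ i \<le> (expect \<rho> (?P i))\<^sup>2"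
        using l unfolding down_closure_def Qset_def by auto
      have "w \<bullet> x \<le> ?f \<rho>"
        unfolding inner_vec_def using w x by (auto simp: nonneg_orthant_def intro!: sum_mono mult_left_mono)
      then show "x \<in> {u. w \<bullet> u \<le> ?f \<rho>\<^sub>0}" using max[OF \<rho>] by simp
    qed
    then have "convex hull (down_closure (Qset S)) \<subseteq> {u. w \<bullet> u \<le> ?f \<rho>\<^sub>0}"
      by (intro hull_minimal convex_halfspace_le)
    then show ?thesis using that unfolding BETA_of_def wv by (auto simp: inner_vec_def)
  qed
  ultimately show ?thesis using v by blast
qed

theorem proposition1:
  fixes G :: "'n::finite \<Rightarrow> 'n \<Rightarrow> bool"
    and S S' :: "'n \<Rightarrow> pauli list"
  assumes "simple_graph G"
    and "realization G S"
    and "realization G S'"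
  shows "BETA_of S = BETA_of S'
         \<and> (\<forall>w \<in> nonneg_orthant.
              \<exists>v \<in> BETA_of S.
                beta_num G w = (\<Sum>i\<in>UNIV. w $ i * v $ i)
                \<and> (\<forall>u \<in> BETA_of S. (\<Sum>i\<in>UNIV. w $ i * u $ i) \<le> (\<Sum>i\<in>UNIV. w $ i * v $ i)))"
proof (intro conjI ballI)
  show "BETA_of S = BETA_of S'" using BETA_of_eq[OF assms(2,3)] .
next
  fix w :: "real ^ 'n" assume w: "w \<in> nonneg_orthant"
  define S\<^sub>0 where "S\<^sub>0 = (SOME S. realization G S)"
  have S\<^sub>0: "realization G S\<^sub>0" unfolding S\<^sub>0_def using assms(2) by (rule someI[of "realization G"])
  have "beta_num G w = Sup {\<Sum>i\<in>UNIV. w $ i * (expect \<rho> (pauli_string_mat (S\<^sub>0 i)))\<^sup>2 | \<rho>.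
                            \<forall>i. density_matrix (2 ^ length (S\<^sub>0 i)) \<rho>}"
    unfolding beta_num_def Let_def S\<^sub>0_def ..
  then show "\<exists>v \<in> BETA_of S. beta_num G w = (\<Sum>i\<in>UNIV. w $ i * v $ i)
               \<and> (\<forall>u \<in> BETA_of S. (\<Sum>i\<in>UNIV. w $ i * u $ i) \<le> (\<Sum>i\<in>UNIV. w $ i * v $ i))"
    using BETA_of_linear_max[OF S\<^sub>0 w] BETA_of_eq[OF assms(2) S\<^sub>0] by simp
qed

end
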